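(* Let the setting and the algorithm RandProx be as in the context, with $g=0$ (no strong convexity of $f$ assumed). Suppose that $\lambda_{\min}(KK^* )>0$ or $\mu_{h^*}>0$, and that $0<\gamma<\frac{2}{L_f}$, $\tau>0$, and $\gamma\tau\big((1-\zeta)\|K\|^2+\omega_{\mathrm{ran}}\big)\le1$. Then the dual problem has a unique solution $u^\star$ and $(u^t)$ converges to $u^\star$ in quadratic mean.
   Context: $\mathcal{X},\mathcal{U}$ finite-dimensional real Hilbert spaces, $K:\mathcal{X}\to\mathcal{U}$ nonzero linear with adjoint $K^*$, $\lambda_{\min}(KK^* )$ the smallest eigenvalue of $KK^*$. $f:\mathcal{X}\to\mathbb{R}$ convex and $L_f$-smooth ($\nabla f$ $L_f$-Lipschitz); $h:\mathcal{U}\to\mathbb{R}\cup\{+\infty\}$ proper closed convex; $h^*$ is $\mu_{h^*}$-strongly convex for some $\mu_{h^*}\ge0$ ($h^*-\frac{\mu_{h^*}}{2}\|\cdot\|^2$ convex). $\mathrm{prox}_{\gamma\phi}(x):=\arg\min_{x'}(\gamma\phi(x')+\frac12\|x'-x\|^2)$. Primal problem: minimize $f(x)+h(Kx)$; dual: minimize $f^*(-K^*u)+h^*(u)$. It is assumed there exists $(x^\star,u^\star)$ with $0\in\nabla f(x^\star)+K^*u^\star$ and $0\in-Kx^\star+\partial h^*(u^\star)$. Algorithm RandProx (with $g=0$): inputs $x^0,u^0,\gamma>0,\tau>0,\omega\ge0$; $v^0:=K^*u^0$; for $t\ge0$: $\hat{x}^t:=x^t-\gamma\nabla f(x^t)-\gamma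 v^t$; $u^{t+1}:=u^t+\frac{1}{1+\omega}\mathcal{R}^t\big(\mathrm{prox}_{\tau h^*}(u^t+\tau K\hat{x}^t)-u^t\big)$; $v^{t+1}:=K^*u^{t+1}$; $x^{t+1}:=\hat{x}^t-\gamma(1+\omega)(v^{t+1}-v^t)$. With $\mathcal{F}_t$ the $\sigma$-algebra generated by $(x^0,u^0),\dots,(x^t,u^t)$ and $r^t:=\mathrm{prox}_{\tau h^*}(u^t+\tau K\hat{x}^t)-u^t$, the random estimate $\mathcal{R}^t(r^t)$ satisfies $\mathbb{E}[\mathcal{R}^t(r^t)\mid\mathcal{F}_t]=r^t$, $\mathbb{E}[\|\mathcal{R}^t(r^t)-r^t\|^2\mid\mathcal{F}_t]\le\omega\|r^t\|^2$, $\mathbb{E}[\|K^*(\mathcal{R}^t(r^t)-r^t)\|^2\mid\mathcal{F}_t]\le\omega_{\mathrm{ran}}\|r^t\|^2-\zeta\|K^*r^t\|^2$, for constants $\omega_{\mathrm{ran}}\ge0$, $\zeta\in[0,1]$. *)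

theory Defs
  imports "HOL-Probability.Probability"
begin

definition proper_fun :: "('a \<Rightarrow> ereal) \<Rightarrow> bool" where
  "proper_fun \<phi> \<longleftrightarrow> (\<forall>x. \<phi> x \<noteq> -\<infinity>) \<and> (\<exists>x. \<phi> x \<noteq> \<infinity>)"

definition convex_fun :: "('a::real_vector \<Rightarrow> ereal) \<Rightarrow> bool" where
  "convex_fun \<phi> \<longleftrightarrow>
     (\<forall>x y t. 0 \<le> t \<and> t \<le> 1 \<longrightarrow>
        \<phi> ((1 - t) *\<^sub>R x + t *\<^sub>R y) \<le> ereal (1 - t) * \<phi> x + ereal t * \<phi> y)"

definition closed_fun :: "('a::topological_space \<Rightarrow> ereal) \<Rightarrow> bool" where
  "closed_fun \<phi> \<longleftrightarrow> closed {(x, r::real). \<phi> x \<le> ereal r}"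

definition fenchel_conj :: "('a::real_inner \<Rightarrow> ereal) \<Rightarrow> 'a \<Rightarrow> ereal" where
  "fenchel_conj \<phi> y = (SUP x. ereal (y \<bullet> x) - \<phi> x)"

definition strongly_convex_fun :: "real \<Rightarrow> ('a::real_normed_vector \<Rightarrow> ereal) \<Rightarrow> bool" where
  "strongly_convex_fun \<mu> \<phi> \<longleftrightarrow> convex_fun (\<lambda>x. \<phi> x - ereal (\<mu> / 2 * (norm x)\<^sup>2))"

text \<open>Proximity operator: prox phi x = argmin_p (phi p + 1/2 norm (p - x)^2).
  (The scaled operator prox_{gamma phi} is obtained by passing the function gamma*phi.)\<close>
definition prox :: "('a::real_normed_vector \<Rightarrow> ereal) \<Rightarrow> 'a \<Rightarrow> 'a" where
  "prox \<phi> x = (SOME p. \<forall>q. \<phi> p + ereal ((norm (p - x))\<^sup>2 / 2) \<le> \<phi> q + ereal ((norm (q - x))\<^sup>2 / 2))"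

definition subdiff :: "('a::real_inner \<Rightarrow> ereal) \<Rightarrow> 'a \<Rightarrow> 'a set" where
  "subdiff \<phi> x = {g. \<bar>\<phi> x\<bar> \<noteq> \<infinity> \<and> (\<forall>y. \<phi> x + ereal (g \<bullet> (y - x)) \<le> \<phi> y)}"

definition lambda_min :: "('a::real_vector \<Rightarrow> 'a) \<Rightarrow> real" where
  "lambda_min A = Inf {l. \<exists>v. v \<noteq> 0 \<and> A v = l *\<^sub>R v}"

end

(*
  For a saddle point (xs, us) let
    Psi(x, u) = |x - xs|^2 / gamma + (1 + omega) / tau * |u - us|^2.
  Cocoercivity of grad f makes the gradient step nonexpansive, the optimality condition of the
  prox of tau h^* makes the dual step strongly monotone, and the step size condition absorbs the
  terms in |r|^2 and |adjoint K r|^2 left over from the relaxation and the randomization.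
  Replacing the exact dual step r^t by its unbiased estimate only adds its variance, because the
  cross terms vanish in conditional expectation. Hence
    E Psi(x^(t+1), u^(t+1)) + E (gamma |adjoint K (u^t - us)|^2 + mu |u^t + r^t - us|^2)
      <= E Psi(x^t, u^t),
  and the second expectation is summable in t. If lambda_min (K o adjoint K) > 0, its first term
  dominates E |u^t - us|^2. If mu > 0, its second term controls E |u^t + r^t - us|^2, and the
  relaxed update
    (1 + omega) E |u^(t+1) - us|^2 <= omega E |u^t - us|^2 + E |u^t + r^t - us|^2
  transfers summability to E |u^t - us|^2. The same two terms give uniqueness of the dual
  solution: the dual objective exceeds its value at us by at least
    |adjoint K (v - us)|^2 / (2 (L_f + 1)) + mu / 2 * |v - us|^2.
*)

theory Submission
  imports Defs
begin

lemma le_of_forall_le_add_mult: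
  fixes a b c :: real
  assumes "\<And>t. 0 < t \<Longrightarrow> t \<le> 1 \<Longrightarrow> a \<le> b + c * t"
  shows "a \<le> b"
proof (rule ccontr)
  assume "\<not> a \<le> b"
  define t where "t = min 1 ((a - b) / (2 * (\<bar>c\<bar> + 1)))"
  have t: "0 < t" "t \<le> 1"
    using \<open>\<not> a \<le> b\<close> by (auto simp: t_def add_pos_nonneg)
  have "c * t \<le> (\<bar>c\<bar> + 1) * t"
    using t by (intro mult_right_mono) auto
  also have "\<dots> \<le> (\<bar>c\<bar> + 1) * ((a - b) / (2 * (\<bar>c\<bar> + 1)))"
    by (intro mult_left_mono) (auto simp: t_def)
  also have "\<dots> = (a - b) / 2"
    by (simp add: field_simps)
  finally show False
    using assms[OF t] \<open>\<not> a \<le> b\<close> by argo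
qed

lemma power2_norm_add_scaleR_diff:
  fixes p q :: "'a::real_inner"
  shows "(norm (p + t *\<^sub>R (q - p)))\<^sup>2
    = (1 - t) * (norm p)\<^sup>2 + t * (norm q)\<^sup>2 - t * (1 - t) * (norm (q - p))\<^sup>2"
  unfolding power2_norm_eq_inner
  by (simp add: inner_add_left inner_add_right inner_diff_left inner_diff_right inner_commute
      algebra_simps)

text \<open>The norm identity behind the relaxed dual update, with \<open>c = 1 + \<omega>\<close>.\<close>

lemma power2_norm_add_scaleR_inverse:
  fixes W \<rho> :: "'a::real_inner"
  assumes c: "0 < c"
  shows "c * (norm (W + (1 / c) *\<^sub>R \<rho>))\<^sup>2 + (c - 1) * (norm \<rho>)\<^sup>2 / c
    = (c - 1) * (norm W)\<^sup>2 + (norm (W + \<rho>))\<^sup>2"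
proof -
  have "(norm (W + (1 / c) *\<^sub>R \<rho>))\<^sup>2 = (norm W)\<^sup>2 + 2 / c * (W \<bullet> \<rho>) + (norm \<rho>)\<^sup>2 / c\<^sup>2"
    unfolding power2_norm_eq_inner
    by (simp add: inner_add_left inner_add_right inner_commute power2_eq_square algebra_simps)
  moreover have "(norm (W + \<rho>))\<^sup>2 = (norm W)\<^sup>2 + 2 * (W \<bullet> \<rho>) + (norm \<rho>)\<^sup>2"
    unfolding power2_norm_eq_inner by (simp add: inner_add_left inner_add_right inner_commute)
  ultimately show ?thesis
    using c by (simp add: field_simps power2_eq_square)
qed

lemma quadratic_le_imp_le:
  fixes s \<beta> C :: real
  assumes "0 \<le> s" "0 \<le> \<beta>" "s\<^sup>2 / 2 - s * \<beta> \<le> C"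
  shows "s \<le> 4 * \<beta>\<^sup>2 + 4 * \<bar>C\<bar> + 1"
proof -
  have "0 \<le> (s - 2 * \<beta>)\<^sup>2 / 2"
    by simp
  then have "s\<^sup>2 \<le> 4 * \<beta>\<^sup>2 + 4 * \<bar>C\<bar>"
    using assms by (simp add: power2_eq_square algebra_simps)
  moreover have "s \<le> s\<^sup>2 + 1"
    using assms(1) zero_le_power2[of "s - 1"] by (simp add: power2_eq_square algebra_simps)
  ultimately show ?thesis
    by linarith
qed

lemma attains_min_if_compact_sublevels:
  fixes \<Phi> :: "'a::heine_borel \<Rightarrow> 'b::linorder"
  assumes "\<And>q. \<Phi> q \<le> \<Phi> q0 \<Longrightarrow> compact {p. \<Phi> p \<le> \<Phi> q}"
  obtains p where "\<And>q. \<Phi> p \<le> \<Phi> q"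
proof -
  define \<F> where "\<F> = (\<lambda>q. {p. \<Phi> p \<le> \<Phi> q}) ` {q. \<Phi> q \<le> \<Phi> q0}"
  have "\<Inter>\<F> \<noteq> {}"
  proof (rule compact_chain)
    show "compact S" if "S \<in> \<F>" for S
      using that assms by (auto simp: \<F>_def)
    show "{} \<notin> \<F>"
      by (auto simp: \<F>_def)
    show "S \<subseteq> T \<or> T \<subseteq> S" if "S \<in> \<F> \<and> T \<in> \<F>" for S T
      using that by (auto simp: \<F>_def)
  qed
  then obtain p where p: "p \<in> \<Inter>\<F>"
    by blast
  have "\<Phi> p \<le> \<Phi> q" for q
  proof (cases "\<Phi> q \<le> \<Phi> q0")
    case False
    moreover have "\<Phi> p \<le> \<Phi> q0"
      using p by (auto simp: \<F>_def)
    ultimately show ?thesis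
      by simp
  qed (use p in \<open>auto simp: \<F>_def\<close>)
  then show ?thesis
    by (rule that)
qed

lemma sum_le_of_telescoping:
  fixes a g :: "nat \<Rightarrow> real"
  assumes nonneg: "\<And>n. 0 \<le> a n" and step: "\<And>n. a (Suc n) + g n \<le> a n"
  shows "(\<Sum>i<n. g i) \<le> a 0"
proof -
  have "(\<Sum>i<n. g i) + a n \<le> a 0"
  proof (induction n)
    case (Suc n)
    then show ?case
      using step[of n] by simp
  qed simp
  then show ?thesis
    using nonneg[of n] by linarith
qed

lemma summable_of_relaxed_recursion:
  fixes e d :: "nat \<Rightarrow> real"
  assumes nonneg: "\<And>n. 0 \<le> e n" and \<omega>: "0 \<le> \<omega>"
    and rec: "\<And>n. (1 + \<omega>) * e (Suc n) \<le> \<omega> * e n + d n"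
    and bounded: "\<And>n. (\<Sum>i<n. d i) \<le> D"
  shows "summable e"
proof (rule summableI_nonneg_bounded[OF nonneg])
  fix n
  have "(\<Sum>i<Suc N. e i) \<le> (1 + \<omega>) * e 0 + D" for N
  proof -
    have shift: "(\<Sum>i<Suc N. e i) = e 0 + (\<Sum>i<N. e (Suc i))"
      by (rule sum.lessThan_Suc_shift)
    have "(1 + \<omega>) * (\<Sum>i<N. e (Suc i)) \<le> \<omega> * (\<Sum>i<N. e i) + (\<Sum>i<N. d i)"
      using rec by (simp add: sum_distrib_left sum.distrib[symmetric] sum_mono)
    also have "\<dots> \<le> \<omega> * (\<Sum>i<Suc N. e i) + D"
      using nonneg bounded[of N] \<omega> by (intro add_mono mult_left_mono) auto
    finally have "(1 + \<omega>) * (\<Sum>i<N. e (Suc i)) \<le> \<omega> * (e 0 + (\<Sum>i<N. e (Suc i))) + D"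
      unfolding shift .
    then show ?thesis
      unfolding shift by (simp add: algebra_simps)
  qed
  then show "(\<Sum>i<n. e i) \<le> (1 + \<omega>) * e 0 + D"
    using nonneg[of 0] \<omega> bounded[of 0] by (cases n) auto
qed

section \<open>Fenchel conjugates and strong convexity\<close>

lemma fenchel_young: "ereal (y \<bullet> x) - \<phi> x \<le> fenchel_conj \<phi> y"
  unfolding fenchel_conj_def by (rule SUP_upper) simp

lemma fenchel_conj_ge_affine:
  assumes "proper_fun h"
  obtains z c where "\<And>v. ereal (v \<bullet> z - c) \<le> fenchel_conj h v"
proof -
  obtain z where "h z \<noteq> \<infinity>" "h z \<noteq> -\<infinity>"
    using assms by (auto simp: proper_fun_def)
  then obtain c where c: "h z = ereal c"
    by (cases "h z") auto
  show ?thesis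
    using that[of z c] fenchel_young[of _ z h] by (simp add: c)
qed

lemma fenchel_conj_neq_minf:
  assumes "proper_fun h"
  shows "fenchel_conj h v \<noteq> -\<infinity>"
proof -
  obtain z c where "\<And>v. ereal (v \<bullet> z - c) \<le> fenchel_conj h v"
    using fenchel_conj_ge_affine[OF assms] by blast
  from this[of v] show ?thesis
    by auto
qed

lemma closed_fenchel_conj_le:
  assumes "continuous_on UNIV g"
  shows "closed {q. fenchel_conj h q \<le> ereal (g q)}"
proof -
  have "{q. fenchel_conj h q \<le> ereal (g q)} = (\<Inter>x. {q. ereal (q \<bullet> x) - h x \<le> ereal (g q)})"
    by (auto simp: fenchel_conj_def SUP_le_iff)
  moreover have "closed {q. ereal (q \<bullet> x) - h x \<le> ereal (g q)}" for x
  proof (cases "h x")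
    case (real b)
    then show ?thesis
      by (simp add: closed_Collect_le continuous_intros assms)
  qed simp_all
  ultimately show ?thesis
    by (simp add: closed_INT)
qed

lemma strongly_convex_funD:
  fixes \<phi> :: "'a::real_inner \<Rightarrow> ereal"
  assumes sc: "strongly_convex_fun \<mu> \<phi>" and p: "\<phi> p = ereal a" and q: "\<phi> q = ereal b"
    and t: "0 \<le> t" "t \<le> 1"
  shows "\<phi> (p + t *\<^sub>R (q - p))
    \<le> ereal ((1 - t) * a + t * b - \<mu> / 2 * (t * (1 - t) * (norm (q - p))\<^sup>2))"
proof -
  define m where "m = p + t *\<^sub>R (q - p)"
  have "(1 - t) *\<^sub>R p + t *\<^sub>R q = m"
    by (simp add: m_def algebra_simps)
  then have "\<phi> m - ereal (\<mu> / 2 * (norm m)\<^sup>2)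
      \<le> ereal (1 - t) * (\<phi> p - ereal (\<mu> / 2 * (norm p)\<^sup>2))
        + ereal t * (\<phi> q - ereal (\<mu> / 2 * (norm q)\<^sup>2))"
    using sc t unfolding strongly_convex_fun_def convex_fun_def by metis
  then have "\<phi> m \<le> ereal ((1 - t) * (a - \<mu> / 2 * (norm p)\<^sup>2) + t * (b - \<mu> / 2 * (norm q)\<^sup>2)
      + \<mu> / 2 * (norm m)\<^sup>2)"
    by (simp add: p q ereal_minus_le)
  also have "\<dots> = ereal ((1 - t) * a + t * b - \<mu> / 2 * (t * (1 - t) * (norm (q - p))\<^sup>2))"
    unfolding m_def power2_norm_add_scaleR_diff by (simp add: field_simps)
  finally show ?thesis
    by (simp add: m_def)
qed

lemma strongly_convex_fun_subgradient:
  fixes \<phi> :: "'a::real_inner \<Rightarrow> ereal"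
  assumes sc: "strongly_convex_fun \<mu> \<phi>" and p: "\<phi> p = ereal a"
    and sub: "\<And>q. ereal (a + g \<bullet> (q - p)) \<le> \<phi> q"
  shows "ereal (a + g \<bullet> (q - p) + \<mu> / 2 * (norm (q - p))\<^sup>2) \<le> \<phi> q"
proof (cases "\<phi> q")
  case (real b)
  have "g \<bullet> (q - p) \<le> b - a - \<mu> / 2 * (norm (q - p))\<^sup>2 + (\<mu> / 2 * (norm (q - p))\<^sup>2) * t"
    if t: "0 < t" "t \<le> 1" for t
  proof -
    have "ereal (a + g \<bullet> ((p + t *\<^sub>R (q - p)) - p)) \<le> \<phi> (p + t *\<^sub>R (q - p))"
      by (rule sub)
    also have "\<dots> \<le> ereal ((1 - t) * a + t * b - \<mu> / 2 * (t * (1 - t) * (norm (q - p))\<^sup>2))"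
      using strongly_convex_funD[OF sc p real] t by simp
    finally have "t * (g \<bullet> (q - p))
        \<le> t * (b - a - \<mu> / 2 * (norm (q - p))\<^sup>2 + (\<mu> / 2 * (norm (q - p))\<^sup>2) * t)"
      by (simp add: algebra_simps)
    then show ?thesis
      using t by simp
  qed
  then have "g \<bullet> (q - p) \<le> b - a - \<mu> / 2 * (norm (q - p))\<^sup>2"
    by (rule le_of_forall_le_add_mult)
  then show ?thesis
    using real by simp
qed (use sub[of q] in simp_all)

section \<open>Smooth convex functions\<close>

locale smooth_fun =
  fixes f :: "'a::real_inner \<Rightarrow> real" and grad :: "'a \<Rightarrow> 'a" and L :: real
  assumes has_derivative_grad: "\<And>z. (f has_derivative (\<lambda>d. grad z \<bullet> d)) (at z)"
    and lipschitz_grad: "L-lipschitz_on UNIV grad"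
begin

lemma L_nonneg: "0 \<le> L"
  using lipschitz_grad by (rule lipschitz_on_nonneg)

lemma norm_grad_diff_le: "norm (grad a - grad b) \<le> L * norm (a - b)"
  using lipschitz_grad by (rule lipschitz_on_normD) simp_all

lemma descent_upper: "f (x + d) \<le> f x + grad x \<bullet> d + L / 2 * (norm d)\<^sup>2"
proof -
  define \<phi> where "\<phi> t = f (x + t *\<^sub>R d) - f x - t * (grad x \<bullet> d) - L / 2 * t\<^sup>2 * (norm d)\<^sup>2" for t
  have f_line: "((\<lambda>t. f (x + t *\<^sub>R d)) has_real_derivative (grad (x + t *\<^sub>R d) \<bullet> d)) (at t)" for t
  proof -
    have "((\<lambda>t. x + t *\<^sub>R d) has_derivative (\<lambda>s. s *\<^sub>R d)) (at t)"
      by (auto intro!: derivative_eq_intros)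
    from has_derivative_compose[OF this has_derivative_grad]
    show ?thesis
      unfolding has_field_derivative_def
      by (rule has_derivative_eq_rhs) (auto simp: fun_eq_iff)
  qed
  have \<phi>': "(\<phi> has_real_derivative
      grad (x + t *\<^sub>R d) \<bullet> d - grad x \<bullet> d - L * t * (norm d)\<^sup>2) (at t)" for t
    unfolding \<phi>_def by (rule f_line derivative_eq_intros refl | simp)+
  have "\<phi> 1 \<le> \<phi> 0"
  proof (rule DERIV_nonpos_imp_nonincreasing[of 0 1 \<phi>])
    fix t :: real
    assume t: "0 \<le> t" "t \<le> 1"
    have "(grad (x + t *\<^sub>R d) - grad x) \<bullet> d \<le> norm (grad (x + t *\<^sub>R d) - grad x) * norm d"
      by (rule norm_cauchy_schwarz)
    also have "\<dots> \<le> L * norm (t *\<^sub>R d) * norm d"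
      using norm_grad_diff_le[of "x + t *\<^sub>R d" x] by (simp add: mult_right_mono)
    also have "\<dots> = L * t * (norm d)\<^sup>2"
      using t by (simp add: power2_eq_square)
    finally show "\<exists>y. DERIV \<phi> t :> y \<and> y \<le> 0"
      using \<phi>' by (intro exI conjI) (auto simp: inner_diff_left)
  qed simp
  then show ?thesis
    by (simp add: \<phi>_def)
qed

lemma descent_lower: "f x + grad x \<bullet> d - L / 2 * (norm d)\<^sup>2 \<le> f (x + d)"
proof -
  interpret neg: smooth_fun "\<lambda>z. - f z" "\<lambda>z. - grad z" L
  proof
    show "((\<lambda>z. - f z) has_derivative (\<lambda>d. - grad z \<bullet> d)) (at z)" for z
      using has_derivative_minus[OF has_derivative_grad[of z]] by simp
    show "L-lipschitz_on UNIV (\<lambda>z. - grad z)"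
      using lipschitz_grad by (simp add: lipschitz_on_def dist_minus)
  qed
  show ?thesis
    using neg.descent_upper[of x d] by simp
qed

text \<open>Evaluate the supremum at \<open>x + (y - grad x) / (L + 1)\<close>; the \<open>+ 1\<close> avoids dividing by \<open>L = 0\<close>.\<close>

lemma fenchel_conj_ge_quadratic:
  "ereal (y \<bullet> x - f x + (norm (y - grad x))\<^sup>2 / (2 * (L + 1)))
    \<le> fenchel_conj (\<lambda>z. ereal (f z)) y"
proof -
  define s where "s = 1 / (L + 1)"
  define d where "d = y - grad x"
  have s: "0 < s" "L * s \<le> 1"
    using L_nonneg by (auto simp: s_def field_simps)
  have "L * s * s * (norm d)\<^sup>2 \<le> s * (norm d)\<^sup>2"
    using s by (simp add: mult_right_mono mult.commute mult.left_commute)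
  then have key: "s * (norm d)\<^sup>2 / 2 \<le> s * (norm d)\<^sup>2 - L / 2 * (s * s * (norm d)\<^sup>2)"
    by simp
  have "y \<bullet> d - grad x \<bullet> d = (norm d)\<^sup>2"
    by (simp add: d_def power2_norm_eq_inner inner_diff_left)
  moreover have "(norm (y - grad x))\<^sup>2 / (2 * (L + 1)) = s * (norm d)\<^sup>2 / 2"
    by (simp add: s_def d_def)
  ultimately have "y \<bullet> x - f x + (norm (y - grad x))\<^sup>2 / (2 * (L + 1))
      \<le> y \<bullet> x - f x + s * (y \<bullet> d - grad x \<bullet> d) - L / 2 * (s * s * (norm d)\<^sup>2)"
    using key by simp
  also have "\<dots> \<le> y \<bullet> (x + s *\<^sub>R d) - f (x + s *\<^sub>R d)"
    using descent_upper[of x "s *\<^sub>R d"]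
    by (simp add: power2_eq_square inner_add_right algebra_simps)
  finally have "ereal (y \<bullet> x - f x + (norm (y - grad x))\<^sup>2 / (2 * (L + 1)))
      \<le> ereal (y \<bullet> (x + s *\<^sub>R d)) - ereal (f (x + s *\<^sub>R d))"
    by simp
  also have "\<dots> \<le> fenchel_conj (\<lambda>z. ereal (f z)) y"
    by (rule fenchel_young)
  finally show ?thesis .
qed

end

locale smooth_convex_fun = smooth_fun +
  assumes convex: "convex_on UNIV f"
begin

lemma gradient_inequality: "f x + grad x \<bullet> (y - x) \<le> f y"
proof -
  have "grad x \<bullet> (y - x) \<le> f y - f x + (L / 2 * (norm (y - x))\<^sup>2) * t"
    if t: "0 < t" "t \<le> 1" for t
  proof -
    have "f (x + t *\<^sub>R (y - x)) \<le> (1 - t) * f x + t * f y"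
      using convex_onD[OF convex, of t x y] t by (simp add: algebra_simps)
    moreover have "(norm (t *\<^sub>R (y - x)))\<^sup>2 = t * t * (norm (y - x))\<^sup>2"
      by (simp add: power2_eq_square)
    ultimately have "t * (grad x \<bullet> (y - x))
        \<le> t * (f y - f x + (L / 2 * (norm (y - x))\<^sup>2) * t)"
      using descent_lower[of x "t *\<^sub>R (y - x)"] by (simp add: algebra_simps)
    then show ?thesis
      using t by simp
  qed
  then have "grad x \<bullet> (y - x) \<le> f y - f x"
    by (rule le_of_forall_le_add_mult)
  then show ?thesis
    by simp
qed

text \<open>Evaluate the descent bound at the gradient step \<open>b - (grad b - grad a) / L\<close>.\<close>

lemma gradient_inequality_strong:
  assumes "0 < L"
  shows "f a + grad a \<bullet> (b - a) + (norm (grad b - grad a))\<^sup>2 / (2 * L) \<le> f b"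
proof -
  define v where "v = grad b - grad a"
  define c where "c = b - (1 / L) *\<^sub>R v"
  have "f a + grad a \<bullet> (b - a) - grad a \<bullet> v / L \<le> f c"
    using gradient_inequality[of a c] by (simp add: c_def inner_diff_right)
  moreover have "f c \<le> f b - grad b \<bullet> v / L + (norm v)\<^sup>2 / (2 * L)"
    using descent_upper[of b "- (1 / L) *\<^sub>R v"] assms
    by (simp add: c_def power_divide power2_eq_square field_simps)
  moreover have "grad b \<bullet> v / L - grad a \<bullet> v / L = (norm v)\<^sup>2 / L"
    by (simp add: v_def power2_norm_eq_inner inner_diff_left diff_divide_distrib [symmetric])
  moreover have "(norm v)\<^sup>2 / L = (norm v)\<^sup>2 / (2 * L) + (norm v)\<^sup>2 / (2 * L)"
    by simp
  ultimately show ?thesis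
    unfolding v_def by linarith
qed

lemma grad_cocoercive: "(norm (grad x - grad y))\<^sup>2 \<le> L * ((grad x - grad y) \<bullet> (x - y))"
proof (cases "L = 0")
  case True
  then show ?thesis
    using norm_grad_diff_le[of x y] by simp
next
  case False
  then have L: "0 < L"
    using L_nonneg by simp
  have "(norm (grad x - grad y))\<^sup>2 / L \<le> (grad x - grad y) \<bullet> (x - y)"
    using gradient_inequality_strong[OF L, of x y] gradient_inequality_strong[OF L, of y x]
    by (simp add: norm_minus_commute inner_diff_left inner_diff_right inner_commute field_simps)
  then show ?thesis
    using L by (simp add: field_simps)
qed

lemma gradient_step_nonexpansive:
  assumes "0 < \<gamma>" "\<gamma> * L \<le> 2"
  shows "(norm ((x - y) - \<gamma> *\<^sub>R (grad x - grad y)))\<^sup>2 \<le> (norm (x - y))\<^sup>2"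
proof -
  define p where "p = (grad x - grad y) \<bullet> (x - y)"
  define n where "n = (norm (grad x - grad y))\<^sup>2"
  have n: "n \<le> L * p" "0 \<le> n"
    using grad_cocoercive[of x y] by (simp_all add: n_def p_def)
  have "0 \<le> p"
  proof (cases "L = 0")
    case True
    then show ?thesis
      using n by (simp add: n_def p_def)
  next
    case False
    moreover have "0 \<le> L * p"
      using n by linarith
    ultimately show ?thesis
      using L_nonneg by (simp add: zero_le_mult_iff)
  qed
  have "\<gamma> * n \<le> (\<gamma> * L) * p"
    using n assms by (simp add: mult.assoc)
  also have "\<dots> \<le> 2 * p"
    using assms \<open>0 \<le> p\<close> by (simp add: mult_right_mono)
  finally have "\<gamma> * (\<gamma> * n) \<le> \<gamma> * (2 * p)"
    using assms by simp
  moreover have "(norm ((x - y) - \<gamma> *\<^sub>R (grad x - grad y)))\<^sup>2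
      = (norm (x - y))\<^sup>2 - 2 * \<gamma> * p + \<gamma> * (\<gamma> * n)"
    unfolding n_def p_def power2_norm_eq_inner
    by (simp add: inner_diff_left inner_diff_right inner_commute algebra_simps)
  ultimately show ?thesis
    by simp
qed

lemma fenchel_conj_grad:
  "fenchel_conj (\<lambda>z. ereal (f z)) (grad x) = ereal (grad x \<bullet> x - f x)"
proof (rule antisym)
  show "fenchel_conj (\<lambda>z. ereal (f z)) (grad x) \<le> ereal (grad x \<bullet> x - f x)"
    unfolding fenchel_conj_def
  proof (rule SUP_least)
    fix y
    show "ereal (grad x \<bullet> y) - ereal (f y) \<le> ereal (grad x \<bullet> x - f x)"
      using gradient_inequality[of x y] by (simp add: inner_diff_right)
  qed
  show "ereal (grad x \<bullet> x - f x) \<le> fenchel_conj (\<lambda>z. ereal (f z)) (grad x)"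
    using fenchel_young[of "grad x" x "\<lambda>z. ereal (f z)"] by simp
qed

end

section \<open>The proximity operator of a conjugate\<close>

lemma bounded_prox_sublevel:
  fixes h :: "'u::euclidean_space \<Rightarrow> ereal"
  assumes h: "proper_fun h" and \<tau>: "0 < \<tau>"
  shows "bounded {q. ereal \<tau> * fenchel_conj h q + ereal ((norm (q - z))\<^sup>2 / 2) \<le> ereal c}"
proof -
  obtain z0 c0 where lb: "\<And>v. ereal (v \<bullet> z0 - c0) \<le> fenchel_conj h v"
    using fenchel_conj_ge_affine[OF h] by blast
  define \<beta> where "\<beta> = \<tau> * norm z0 + norm z"
  define C where "C = c + \<tau> * c0 - (norm z)\<^sup>2 / 2"
  have "norm q \<le> 4 * \<beta>\<^sup>2 + 4 * \<bar>C\<bar> + 1"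
    if q: "ereal \<tau> * fenchel_conj h q + ereal ((norm (q - z))\<^sup>2 / 2) \<le> ereal c" for q
  proof (rule quadratic_le_imp_le)
    show "0 \<le> \<beta>"
      using \<tau> by (simp add: \<beta>_def)
    obtain v where v: "fenchel_conj h q = ereal v"
      using q fenchel_conj_neq_minf[OF h, of q] \<tau> by (cases "fenchel_conj h q") auto
    then have "\<tau> * v + (norm (q - z))\<^sup>2 / 2 \<le> c"
      using q by simp
    moreover have "\<tau> * (q \<bullet> z0 - c0) \<le> \<tau> * v"
      using lb[of q] v \<tau> by simp
    moreover have "\<tau> * (- (norm q * norm z0)) \<le> \<tau> * (q \<bullet> z0)"
      using norm_cauchy_schwarz[of "-q" z0] \<tau> by (intro mult_left_mono) auto
    moreover have "q \<bullet> z \<le> norm q * norm z"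
      by (rule norm_cauchy_schwarz)
    moreover have "(norm (q - z))\<^sup>2 = (norm q)\<^sup>2 - 2 * (q \<bullet> z) + (norm z)\<^sup>2"
      unfolding power2_norm_eq_inner by (simp add: inner_diff_left inner_diff_right inner_commute)
    ultimately show "(norm q)\<^sup>2 / 2 - norm q * \<beta> \<le> C"
      unfolding \<beta>_def C_def by (simp add: algebra_simps) argo
  qed simp
  then show ?thesis
    unfolding bounded_iff by blast
qed

lemma compact_prox_sublevel:
  fixes h :: "'u::euclidean_space \<Rightarrow> ereal"
  assumes h: "proper_fun h" and \<tau>: "0 < \<tau>"
  shows "compact {q. ereal \<tau> * fenchel_conj h q + ereal ((norm (q - z))\<^sup>2 / 2) \<le> ereal c}"
    (is "compact ?S")
proof -
  have "q \<in> ?S \<longleftrightarrow> fenchel_conj h q \<le> ereal ((c - (norm (q - z))\<^sup>2 / 2) / \<tau>)" for q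
    using fenchel_conj_neq_minf[OF h, of q] \<tau> by (cases "fenchel_conj h q") (auto simp: field_simps)
  then have "?S = {q. fenchel_conj h q \<le> ereal ((c - (norm (q - z))\<^sup>2 / 2) / \<tau>)}"
    by blast
  then have "closed ?S"
    by (simp only:) (intro closed_fenchel_conj_le continuous_intros, use \<tau> in auto)
  with bounded_prox_sublevel[OF h \<tau>] show ?thesis
    by (simp add: compact_eq_bounded_closed)
qed

lemma prox_fenchel_conj_minimizes:
  fixes h :: "'u::euclidean_space \<Rightarrow> ereal" and z :: 'u
  assumes h: "proper_fun h" and \<tau>: "0 < \<tau>" and dom: "fenchel_conj h u0 \<noteq> \<infinity>"
  defines "p \<equiv> prox (\<lambda>v. ereal \<tau> * fenchel_conj h v) z"
  shows "ereal \<tau> * fenchel_conj h p + ereal ((norm (p - z))\<^sup>2 / 2)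
    \<le> ereal \<tau> * fenchel_conj h q + ereal ((norm (q - z))\<^sup>2 / 2)"
proof -
  define \<Phi> where "\<Phi> q = ereal \<tau> * fenchel_conj h q + ereal ((norm (q - z))\<^sup>2 / 2)" for q
  have nm: "\<Phi> q \<noteq> -\<infinity>" for q
    using fenchel_conj_neq_minf[OF h, of q] \<tau> by (cases "fenchel_conj h q") (auto simp: \<Phi>_def)
  have fin: "\<Phi> u0 \<noteq> \<infinity>"
    using fenchel_conj_neq_minf[OF h, of u0] dom by (cases "fenchel_conj h u0") (auto simp: \<Phi>_def)
  have sublevel: "compact {p. \<Phi> p \<le> \<Phi> q}" if le: "\<Phi> q \<le> \<Phi> u0" for q
  proof -
    obtain c where "\<Phi> q = ereal c"
      using le nm[of q] fin by (cases "\<Phi> q"; cases "\<Phi> u0") auto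
    then show ?thesis
      using compact_prox_sublevel[OF h \<tau>, of z c] by (simp add: \<Phi>_def)
  qed
  obtain p' where "\<And>q. \<Phi> p' \<le> \<Phi> q"
    using attains_min_if_compact_sublevels[OF sublevel] by blast
  then have "\<exists>p. \<forall>q. ereal \<tau> * fenchel_conj h p + ereal ((norm (p - z))\<^sup>2 / 2)
      \<le> ereal \<tau> * fenchel_conj h q + ereal ((norm (q - z))\<^sup>2 / 2)"
    unfolding \<Phi>_def by blast
  from someI_ex[OF this] show ?thesis
    unfolding p_def prox_def by blast
qed

lemma prox_subgradient:
  fixes \<phi> :: "'a::real_inner \<Rightarrow> ereal"
  assumes sc: "strongly_convex_fun \<mu> \<phi>" and \<mu>: "0 \<le> \<mu>" and \<tau>: "0 < \<tau>"
    and nm: "\<And>q. \<phi> q \<noteq> -\<infinity>" and a: "\<phi> p = ereal a"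
    and min: "\<And>q. ereal \<tau> * \<phi> p + ereal ((norm (p - z))\<^sup>2 / 2)
      \<le> ereal \<tau> * \<phi> q + ereal ((norm (q - z))\<^sup>2 / 2)"
  shows "ereal (a + ((1 / \<tau>) *\<^sub>R (z - p)) \<bullet> (q - p)) \<le> \<phi> q"
proof (cases "\<phi> q")
  case (real b)
  define d where "d = q - p"
  have "a \<le> b + ((p - z) \<bullet> d) / \<tau> + ((norm d)\<^sup>2 / (2 * \<tau>)) * t"
    if t: "0 < t" "t \<le> 1" for t
  proof -
    define m where "m = p + t *\<^sub>R d"
    have "\<phi> m \<le> ereal ((1 - t) * a + t * b - \<mu> / 2 * (t * (1 - t) * (norm d)\<^sup>2))"
      unfolding m_def d_def using strongly_convex_funD[OF sc a real] t by simp
    also have "\<dots> \<le> ereal ((1 - t) * a + t * b)"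
      using \<mu> t by simp
    finally have \<phi>m: "ereal \<tau> * \<phi> m \<le> ereal (\<tau> * ((1 - t) * a + t * b))"
      using \<tau> by (metis ereal_mult_left_mono less_imp_le times_ereal.simps(1) ereal_less_eq(5))
    have "ereal (\<tau> * a + (norm (p - z))\<^sup>2 / 2) \<le> ereal \<tau> * \<phi> m + ereal ((norm (m - z))\<^sup>2 / 2)"
      using min[of m] a by simp
    also have "\<dots> \<le> ereal (\<tau> * ((1 - t) * a + t * b)) + ereal ((norm (m - z))\<^sup>2 / 2)"
      using \<phi>m by (rule add_right_mono)
    finally have i: "\<tau> * a + (norm (p - z))\<^sup>2 / 2
        \<le> \<tau> * ((1 - t) * a + t * b) + (norm (m - z))\<^sup>2 / 2"
      by simp
    have "(norm (m - z))\<^sup>2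
        = (norm (p - z))\<^sup>2 + 2 * t * ((p - z) \<bullet> d) + t * t * (norm d)\<^sup>2"
      unfolding m_def power2_norm_eq_inner
      by (simp add: inner_add_left inner_add_right inner_diff_left inner_diff_right inner_commute
          algebra_simps)
    then have "t * (\<tau> * a) \<le> t * (\<tau> * b + (p - z) \<bullet> d + (norm d)\<^sup>2 / 2 * t)"
      using i by (simp add: algebra_simps)
    then have "\<tau> * a \<le> \<tau> * b + (p - z) \<bullet> d + (norm d)\<^sup>2 / 2 * t"
      using t by simp
    then have "a \<le> (\<tau> * b + (p - z) \<bullet> d + (norm d)\<^sup>2 / 2 * t) / \<tau>"
      using \<tau> by (subst pos_le_divide_eq) (auto simp: mult.commute)
    also have "\<dots> = b + ((p - z) \<bullet> d) / \<tau> + ((norm d)\<^sup>2 / (2 * \<tau>)) * t"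
      using \<tau> by (simp add: field_simps)
    finally show ?thesis .
  qed
  then have "a \<le> b + ((p - z) \<bullet> d) / \<tau>"
    by (rule le_of_forall_le_add_mult)
  moreover have "((1 / \<tau>) *\<^sub>R (z - p)) \<bullet> d = - (((p - z) \<bullet> d) / \<tau>)"
    by (simp add: inner_diff_left diff_divide_distrib)
  ultimately show ?thesis
    using real by (simp add: d_def)
qed (use nm in auto)

lemma prox_fenchel_conj_subgradient:
  fixes h :: "'u::euclidean_space \<Rightarrow> ereal" and z :: 'u
  assumes h: "proper_fun h" and \<tau>: "0 < \<tau>" and dom: "fenchel_conj h u0 \<noteq> \<infinity>"
    and sc: "strongly_convex_fun \<mu> (fenchel_conj h)" and \<mu>: "0 \<le> \<mu>"
  defines "p \<equiv> prox (\<lambda>v. ereal \<tau> * fenchel_conj h v) z"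
  obtains a where "fenchel_conj h p = ereal a"
    "\<And>q. ereal (a + ((1 / \<tau>) *\<^sub>R (z - p)) \<bullet> (q - p) + \<mu> / 2 * (norm (q - p))\<^sup>2)
      \<le> fenchel_conj h q"
proof -
  note nm = fenchel_conj_neq_minf[OF h]
  have min: "ereal \<tau> * fenchel_conj h p + ereal ((norm (p - z))\<^sup>2 / 2)
      \<le> ereal \<tau> * fenchel_conj h q + ereal ((norm (q - z))\<^sup>2 / 2)" for q
    unfolding p_def by (rule prox_fenchel_conj_minimizes[OF h \<tau> dom])
  have "fenchel_conj h p \<noteq> \<infinity>"
  proof
    assume "fenchel_conj h p = \<infinity>"
    then show False
      using min[of u0] dom nm[of u0] \<tau> by (cases "fenchel_conj h u0") auto
  qed
  then obtain a where a: "fenchel_conj h p = ereal a"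
    using nm[of p] by (cases "fenchel_conj h p") auto
  show ?thesis
    using that[OF a strongly_convex_fun_subgradient[OF sc a prox_subgradient[OF sc \<mu> \<tau> nm a min]]] .
qed

lemma prox_fenchel_conj_nonexpansive:
  fixes h :: "'u::euclidean_space \<Rightarrow> ereal"
  assumes h: "proper_fun h" and \<tau>: "0 < \<tau>" and dom: "fenchel_conj h u0 \<noteq> \<infinity>"
    and sc: "strongly_convex_fun \<mu> (fenchel_conj h)" and \<mu>: "0 \<le> \<mu>"
  shows "norm (prox (\<lambda>v. ereal \<tau> * fenchel_conj h v) z1 - prox (\<lambda>v. ereal \<tau> * fenchel_conj h v) z2)
    \<le> norm (z1 - z2)"
proof -
  define p1 where "p1 = prox (\<lambda>v. ereal \<tau> * fenchel_conj h v) z1"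
  define p2 where "p2 = prox (\<lambda>v. ereal \<tau> * fenchel_conj h v) z2"
  obtain a1 where a1: "fenchel_conj h p1 = ereal a1"
    "\<And>q. ereal (a1 + ((1 / \<tau>) *\<^sub>R (z1 - p1)) \<bullet> (q - p1) + \<mu> / 2 * (norm (q - p1))\<^sup>2)
      \<le> fenchel_conj h q"
    using prox_fenchel_conj_subgradient[OF h \<tau> dom sc \<mu>, of z1] unfolding p1_def by blast
  obtain a2 where a2: "fenchel_conj h p2 = ereal a2"
    "\<And>q. ereal (a2 + ((1 / \<tau>) *\<^sub>R (z2 - p2)) \<bullet> (q - p2) + \<mu> / 2 * (norm (q - p2))\<^sup>2)
      \<le> fenchel_conj h q"
    using prox_fenchel_conj_subgradient[OF h \<tau> dom sc \<mu>, of z2] unfolding p2_def by blast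
  have "a1 + ((1 / \<tau>) *\<^sub>R (z1 - p1)) \<bullet> (p2 - p1) + \<mu> / 2 * (norm (p2 - p1))\<^sup>2 \<le> a2"
    "a2 + ((1 / \<tau>) *\<^sub>R (z2 - p2)) \<bullet> (p1 - p2) + \<mu> / 2 * (norm (p1 - p2))\<^sup>2 \<le> a1"
    using a1(2)[of p2] a2(2)[of p1] a1(1) a2(1) by simp_all
  moreover have "0 \<le> \<mu> / 2 * (norm (p2 - p1))\<^sup>2" "0 \<le> \<mu> / 2 * (norm (p1 - p2))\<^sup>2"
    using \<mu> by simp_all
  ultimately have "((1 / \<tau>) *\<^sub>R (z1 - p1)) \<bullet> (p2 - p1) + ((1 / \<tau>) *\<^sub>R (z2 - p2)) \<bullet> (p1 - p2) \<le> 0"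
    by linarith
  then have "(1 / \<tau>) * (((z1 - z2) - (p1 - p2)) \<bullet> (p1 - p2)) \<ge> 0"
    by (simp add: inner_diff_left inner_diff_right inner_commute algebra_simps)
  then have "(norm (p1 - p2))\<^sup>2 \<le> (z1 - z2) \<bullet> (p1 - p2)"
    using \<tau> by (simp add: zero_le_divide_iff inner_diff_left power2_norm_eq_inner)
  also have "\<dots> \<le> norm (z1 - z2) * norm (p1 - p2)"
    by (rule norm_cauchy_schwarz)
  finally show ?thesis
    unfolding p1_def [symmetric] p2_def [symmetric]
    by (cases "p1 = p2") (auto simp: power2_eq_square mult_le_cancel_right)
qed

lemma norm_adjoint_le:
  fixes K :: "'a::euclidean_space \<Rightarrow> 'b::euclidean_space"
  assumes K: "linear K"
  shows "norm (adjoint K v) \<le> onorm K * norm v"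
proof -
  have bl: "bounded_linear K"
    using K by (rule linear_conv_bounded_linear [THEN iffD1])
  have "(norm (adjoint K v))\<^sup>2 = K (adjoint K v) \<bullet> v"
    by (simp add: power2_norm_eq_inner adjoint_works[OF K])
  also have "\<dots> \<le> norm (K (adjoint K v)) * norm v"
    by (rule norm_cauchy_schwarz)
  also have "\<dots> \<le> onorm K * norm (adjoint K v) * norm v"
    by (intro mult_right_mono onorm[OF bl]) simp
  finally have "norm (adjoint K v) * norm (adjoint K v) \<le> (onorm K * norm v) * norm (adjoint K v)"
    by (simp add: power2_eq_square algebra_simps)
  then show ?thesis
    by (cases "adjoint K v = 0") (auto simp: mult_le_cancel_right onorm_pos_le[OF bl])
qed

text \<open>Every eigenvalue of \<open>K K\<^sup>*\<close> is nonnegative, so a kernel vector of \<open>K\<^sup>*\<close> would make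
  \<open>lambda_min (K \<circ> adjoint K) \<le> 0\<close>.\<close>

lemma inj_adjoint_if_lambda_min_pos:
  fixes K :: "'a::euclidean_space \<Rightarrow> 'b::euclidean_space"
  assumes K: "linear K" and \<lambda>: "lambda_min (K \<circ> adjoint K) > 0"
  shows "inj (adjoint K)"
proof -
  define E where "E = {l. \<exists>v. v \<noteq> 0 \<and> (K \<circ> adjoint K) v = l *\<^sub>R v}"
  have "bdd_below E"
  proof (rule bdd_belowI)
    fix l
    assume "l \<in> E"
    then obtain v where v: "v \<noteq> 0" "K (adjoint K v) = l *\<^sub>R v"
      by (auto simp: E_def)
    have "0 \<le> (norm (adjoint K v))\<^sup>2"
      by simp
    also have "\<dots> = l * (norm v)\<^sup>2"
      by (simp add: power2_norm_eq_inner adjoint_works[OF K] v)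
    finally show "0 \<le> l"
      using v by (simp add: zero_le_mult_iff)
  qed
  have "w = 0" if w: "adjoint K w = 0" for w
  proof (rule ccontr)
    assume "w \<noteq> 0"
    then have "0 \<in> E"
      unfolding E_def using w linear_0[OF K] by (intro CollectI exI[of _ w]) simp
    then have "Inf E \<le> 0"
      using \<open>bdd_below E\<close> by (rule cInf_lower)
    then show False
      using \<lambda> by (simp add: lambda_min_def E_def)
  qed
  then show ?thesis
    using linear_inj_iff_eq_0[OF adjoint_linear[OF K]] by blast
qed

section \<open>One step of the deterministic iteration\<close>

locale randprox_setting = smooth_convex_fun f gradf Lf
  for f :: "'x::euclidean_space \<Rightarrow> real" and gradf :: "'x \<Rightarrow> 'x" and Lf :: real +
  fixes h :: "'u::euclidean_space \<Rightarrow> ereal" and K :: "'x \<Rightarrow> 'u"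
    and \<mu> \<gamma> \<tau> \<omega> \<omega>ran \<zeta> :: real and xs :: 'x and us :: 'u
  assumes K_lin: "linear K"
    and h_proper: "proper_fun h"
    and mu_nonneg: "\<mu> \<ge> 0" and h_strong: "strongly_convex_fun \<mu> (fenchel_conj h)"
    and om_nonneg: "\<omega> \<ge> 0" and omran_nonneg: "\<omega>ran \<ge> 0" and zeta: "0 \<le> \<zeta>" "\<zeta> \<le> 1"
    and gamma: "0 < \<gamma>" "\<gamma> * Lf < 2"
    and tau: "0 < \<tau>"
    and step: "\<gamma> * \<tau> * ((1 - \<zeta>) * (onorm K)\<^sup>2 + \<omega>ran) \<le> 1"
    and saddle_primal: "0 = gradf xs + adjoint K us"
    and saddle_dual: "K xs \<in> subdiff (fenchel_conj h) us"
begin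

text \<open>\<open>(xs, us)\<close> is the saddle point; \<open>forward_step\<close> and \<open>dual_step\<close> are \<open>xhat t\<close> and
  \<open>r t\<close> of the algorithm as functions of \<open>(x t, u t)\<close>.\<close>

definition prox_dual :: "'u \<Rightarrow> 'u" where
  "prox_dual z = prox (\<lambda>v. ereal \<tau> * fenchel_conj h v) z"

definition forward_step :: "'x \<Rightarrow> 'u \<Rightarrow> 'x" where
  "forward_step X U = X - \<gamma> *\<^sub>R gradf X - \<gamma> *\<^sub>R adjoint K U"

definition dual_step :: "'x \<Rightarrow> 'u \<Rightarrow> 'u" where
  "dual_step X U = prox_dual (U + \<tau> *\<^sub>R K (forward_step X U)) - U"

definition lyapunov :: "'x \<Rightarrow> 'u \<Rightarrow> real" where
  "lyapunov X U = (norm (X - xs))\<^sup>2 / \<gamma> + (1 + \<omega>) / \<tau> * (norm (U - us))\<^sup>2"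

lemma bounded_linear_K: "bounded_linear K"
  using K_lin by (rule linear_conv_bounded_linear [THEN iffD1])

lemma linear_adjoint_K: "linear (adjoint K)"
  using K_lin by (rule adjoint_linear)

lemma inner_adjoint_K: "x \<bullet> adjoint K y = K x \<bullet> y"
  using K_lin by (rule adjoint_works)

lemma gradf_saddle: "gradf xs = - adjoint K us"
  using saddle_primal by (simp add: eq_neg_iff_add_eq_0)

lemma fenchel_conj_h_saddle:
  obtains b where "fenchel_conj h us = ereal b"
    "\<And>q. ereal (b + K xs \<bullet> (q - us)) \<le> fenchel_conj h q"
proof -
  have "\<bar>fenchel_conj h us\<bar> \<noteq> \<infinity>"
    and sub: "\<And>q. fenchel_conj h us + ereal (K xs \<bullet> (q - us)) \<le> fenchel_conj h q"
    using saddle_dual by (auto simp: subdiff_def)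
  then obtain b where "fenchel_conj h us = ereal b"
    by (cases "fenchel_conj h us") auto
  with sub show ?thesis
    using that by simp
qed

lemma fenchel_conj_h_saddle_finite: "fenchel_conj h us \<noteq> \<infinity>"
  using fenchel_conj_h_saddle by (metis PInfty_neq_ereal(1))

lemma prox_dual_subgradient:
  obtains a where "fenchel_conj h (prox_dual z) = ereal a"
    "\<And>q. ereal (a + ((1 / \<tau>) *\<^sub>R (z - prox_dual z)) \<bullet> (q - prox_dual z)
        + \<mu> / 2 * (norm (q - prox_dual z))\<^sup>2) \<le> fenchel_conj h q"
  using prox_fenchel_conj_subgradient[OF h_proper tau fenchel_conj_h_saddle_finite h_strong mu_nonneg]
  unfolding prox_dual_def by blast

lemma prox_dual_nonexpansive: "norm (prox_dual z1 - prox_dual z2) \<le> norm (z1 - z2)"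
  unfolding prox_dual_def
  by (rule prox_fenchel_conj_nonexpansive[OF h_proper tau fenchel_conj_h_saddle_finite h_strong
        mu_nonneg])

text \<open>Strong monotonicity of \<open>\<partial>h\<^sup>*\<close> between the subgradient at \<open>prox_dual z\<close> and \<open>K xs\<close> at \<open>us\<close>.\<close>

lemma prox_dual_monotone:
  assumes z: "z = U + \<tau> *\<^sub>R g"
  shows "\<mu> / 2 * (norm (prox_dual z - us))\<^sup>2
    \<le> ((U - prox_dual z) \<bullet> (prox_dual z - us)) / \<tau> + (g - K xs) \<bullet> (prox_dual z - us)"
proof -
  define p where "p = prox_dual z"
  obtain a where a: "fenchel_conj h p = ereal a"
    "\<And>q. ereal (a + ((1 / \<tau>) *\<^sub>R (z - p)) \<bullet> (q - p) + \<mu> / 2 * (norm (q - p))\<^sup>2)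
      \<le> fenchel_conj h q"
    using prox_dual_subgradient unfolding p_def by blast
  obtain b where b: "fenchel_conj h us = ereal b"
    "\<And>q. ereal (b + K xs \<bullet> (q - us)) \<le> fenchel_conj h q"
    using fenchel_conj_h_saddle by blast
  have "a + ((1 / \<tau>) *\<^sub>R (z - p)) \<bullet> (us - p) + \<mu> / 2 * (norm (p - us))\<^sup>2 \<le> b"
    using a(2)[of us] by (simp only: b(1) ereal_less_eq(3) norm_minus_commute[of us p])
  moreover have "b + K xs \<bullet> (p - us) \<le> a"
    using b(2)[of p] by (simp only: a(1) ereal_less_eq(3))
  moreover have "((1 / \<tau>) *\<^sub>R (z - p)) \<bullet> (us - p)
      = - (((U - p) \<bullet> (p - us)) / \<tau> + g \<bullet> (p - us))"
    using tau unfolding z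
    by (simp add: inner_diff_left inner_diff_right inner_add_left algebra_simps diff_divide_distrib
        add_divide_distrib)
  ultimately show ?thesis
    unfolding p_def [symmetric] inner_diff_left[of g] by linarith
qed

lemma prox_dual_saddle: "prox_dual (us + \<tau> *\<^sub>R K xs) = us"
proof -
  define p where "p = prox_dual (us + \<tau> *\<^sub>R K xs)"
  have "\<mu> / 2 * (norm (p - us))\<^sup>2 \<le> ((us - p) \<bullet> (p - us)) / \<tau>"
    using prox_dual_monotone[of _ us "K xs"] unfolding p_def by simp
  moreover have "(us - p) \<bullet> (p - us) = - (norm (p - us))\<^sup>2"
    by (simp add: power2_norm_eq_inner inner_diff_left inner_diff_right inner_commute)
  moreover have "0 \<le> \<mu> / 2 * (norm (p - us))\<^sup>2"
    using mu_nonneg by simp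
  ultimately have "(norm (p - us))\<^sup>2 / \<tau> \<le> 0"
    by simp
  then show ?thesis
    using tau by (simp add: p_def divide_le_0_iff)
qed

lemma forward_step_minus_saddle:
  "forward_step X U - xs = (X - xs) - \<gamma> *\<^sub>R (gradf X - gradf xs) - \<gamma> *\<^sub>R adjoint K (U - us)"
  unfolding forward_step_def gradf_saddle by (simp add: linear_diff[OF linear_adjoint_K] algebra_simps)

lemma norm_prox_dual_step_le:
  "norm (prox_dual (U + \<tau> *\<^sub>R K (forward_step X U)) - us)
    \<le> norm ((U - us) + \<tau> *\<^sub>R K (forward_step X U - xs))"
proof -
  have "norm (prox_dual (U + \<tau> *\<^sub>R K (forward_step X U)) - us)
      = norm (prox_dual (U + \<tau> *\<^sub>R K (forward_step X U)) - prox_dual (us + \<tau> *\<^sub>R K xs))"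
    by (simp add: prox_dual_saddle)
  also have "\<dots> \<le> norm ((U + \<tau> *\<^sub>R K (forward_step X U)) - (us + \<tau> *\<^sub>R K xs))"
    by (rule prox_dual_nonexpansive)
  also have "(U + \<tau> *\<^sub>R K (forward_step X U)) - (us + \<tau> *\<^sub>R K xs)
      = (U - us) + \<tau> *\<^sub>R K (forward_step X U - xs)"
    by (simp add: linear_diff[OF K_lin] algebra_simps)
  finally show ?thesis .
qed

text \<open>This is where the step size condition enters.\<close>

lemma dual_step_variance_le:
  fixes \<rho> :: 'u
  shows "\<gamma> * \<omega>ran * (norm \<rho>)\<^sup>2 - \<gamma> * \<zeta> * (norm (adjoint K \<rho>))\<^sup>2
    \<le> (norm \<rho>)\<^sup>2 / \<tau> - \<gamma> * (norm (adjoint K \<rho>))\<^sup>2"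
proof -
  have "(norm (adjoint K \<rho>))\<^sup>2 \<le> (onorm K * norm \<rho>)\<^sup>2"
    using norm_adjoint_le[OF K_lin, of \<rho>] by (simp add: power_mono)
  then have "\<gamma> * (1 - \<zeta>) * (norm (adjoint K \<rho>))\<^sup>2 \<le> \<gamma> * (1 - \<zeta>) * ((onorm K)\<^sup>2 * (norm \<rho>)\<^sup>2)"
    using gamma zeta by (intro mult_left_mono) (auto simp: power_mult_distrib)
  moreover have "\<gamma> * ((1 - \<zeta>) * (onorm K)\<^sup>2 + \<omega>ran) * (norm \<rho>)\<^sup>2 \<le> (norm \<rho>)\<^sup>2 / \<tau>"
  proof -
    have "\<gamma> * ((1 - \<zeta>) * (onorm K)\<^sup>2 + \<omega>ran) \<le> 1 / \<tau>"
      using step tau by (simp add: field_simps mult.commute mult.left_commute)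
    then show ?thesis
      by (metis mult_right_mono zero_le_power2 divide_inverse mult_1 mult.commute)
  qed
  ultimately show ?thesis
    by (simp add: algebra_simps)
qed

lemma dual_step_monotone:
  assumes W: "W = U - us" and D: "D = U + dual_step X U - us"
    and a: "a = (X - xs) - \<gamma> *\<^sub>R (gradf X - gradf xs)"
  shows "\<mu> / 2 * (norm D)\<^sup>2
    \<le> (W \<bullet> D) / \<tau> - (norm D)\<^sup>2 / \<tau> + a \<bullet> adjoint K D - \<gamma> * (adjoint K W \<bullet> adjoint K D)"
proof -
  define P where "P = prox_dual (U + \<tau> *\<^sub>R K (forward_step X U))"
  have fwd: "forward_step X U - xs = a - \<gamma> *\<^sub>R adjoint K W"
    unfolding forward_step_minus_saddle a W ..
  have "\<mu> / 2 * (norm (P - us))\<^sup>2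
      \<le> ((U - P) \<bullet> (P - us)) / \<tau> + (K (forward_step X U) - K xs) \<bullet> (P - us)"
    unfolding P_def by (rule prox_dual_monotone) simp
  moreover have "P - us = D" "U - P = W - D"
    by (simp_all add: P_def D W dual_step_def)
  moreover have "(W - D) \<bullet> D = W \<bullet> D - (norm D)\<^sup>2"
    by (simp add: inner_diff_left power2_norm_eq_inner)
  moreover have "(K (forward_step X U) - K xs) \<bullet> D
      = a \<bullet> adjoint K D - \<gamma> * (adjoint K W \<bullet> adjoint K D)"
    unfolding linear_diff[OF K_lin, symmetric] fwd inner_adjoint_K [symmetric]
    by (simp add: inner_diff_left)
  ultimately show ?thesis
    by (simp add: diff_divide_distrib)
qed

lemma lyapunov_exact_step_eq:
  assumes W: "W = U - us" and D: "D = U + \<rho> - us"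
    and a: "a = (X - xs) - \<gamma> *\<^sub>R (gradf X - gradf xs)"
  shows "lyapunov (forward_step X U - \<gamma> *\<^sub>R adjoint K \<rho>) (U + (1 / (1 + \<omega>)) *\<^sub>R \<rho>)
      + \<omega> * (norm \<rho>)\<^sup>2 / (\<tau> * (1 + \<omega>))
    = (norm a)\<^sup>2 / \<gamma> - 2 * (a \<bullet> adjoint K D) + \<gamma> * (norm (adjoint K D))\<^sup>2
      + \<omega> * (norm W)\<^sup>2 / \<tau> + (norm D)\<^sup>2 / \<tau>"
proof -
  have "adjoint K D = adjoint K W + adjoint K \<rho>"
    unfolding W D
    by (simp add: linear_diff[OF linear_adjoint_K] linear_add[OF linear_adjoint_K] algebra_simps)
  moreover have "forward_step X U - xs = a - \<gamma> *\<^sub>R adjoint K W"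
    unfolding forward_step_minus_saddle a W ..
  ultimately have step: "forward_step X U - \<gamma> *\<^sub>R adjoint K \<rho> - xs = a - \<gamma> *\<^sub>R adjoint K D"
    by (simp add: algebra_simps)
  have "(norm (a - \<gamma> *\<^sub>R adjoint K D))\<^sup>2
      = (norm a)\<^sup>2 - 2 * \<gamma> * (a \<bullet> adjoint K D) + \<gamma> * \<gamma> * (norm (adjoint K D))\<^sup>2"
    unfolding power2_norm_eq_inner
    by (simp add: inner_diff_left inner_diff_right inner_commute algebra_simps)
  then have x: "(norm (forward_step X U - \<gamma> *\<^sub>R adjoint K \<rho> - xs))\<^sup>2 / \<gamma>
      = (norm a)\<^sup>2 / \<gamma> - 2 * (a \<bullet> adjoint K D) + \<gamma> * (norm (adjoint K D))\<^sup>2"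
    unfolding step using gamma by (simp add: field_simps)
  have eq: "U + (1 / (1 + \<omega>)) *\<^sub>R \<rho> - us = W + (1 / (1 + \<omega>)) *\<^sub>R \<rho>"
    by (simp add: W algebra_simps)
  have scale: "c / \<tau> * n + \<omega> * m / (\<tau> * c) = (c * n + \<omega> * m / c) / \<tau>" for c n m :: real
    by (simp add: add_divide_distrib divide_divide_eq_left mult.commute)
  have "(1 + \<omega>) / \<tau> * (norm (U + (1 / (1 + \<omega>)) *\<^sub>R \<rho> - us))\<^sup>2
      + \<omega> * (norm \<rho>)\<^sup>2 / (\<tau> * (1 + \<omega>))
      = ((1 + \<omega>) * (norm (W + (1 / (1 + \<omega>)) *\<^sub>R \<rho>))\<^sup>2 + \<omega> * (norm \<rho>)\<^sup>2 / (1 + \<omega>)) / \<tau>"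
    unfolding eq by (rule scale)
  also have "\<dots> = (\<omega> * (norm W)\<^sup>2 + (norm D)\<^sup>2) / \<tau>"
    using power2_norm_add_scaleR_inverse[of "1 + \<omega>" W \<rho>] om_nonneg by (simp add: W D algebra_simps)
  finally have u: "(1 + \<omega>) / \<tau> * (norm (U + (1 / (1 + \<omega>)) *\<^sub>R \<rho> - us))\<^sup>2
      + \<omega> * (norm \<rho>)\<^sup>2 / (\<tau> * (1 + \<omega>)) = \<omega> * (norm W)\<^sup>2 / \<tau> + (norm D)\<^sup>2 / \<tau>"
    by (simp add: add_divide_distrib)
  from x u show ?thesis
    unfolding lyapunov_def by linarith
qed

text \<open>Adding the monotonicity inequality of the dual step to the expansion of the Lyapunov
  function leaves exactly the decrease below.\<close>

lemma lyapunov_decrease: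
  fixes X :: 'x and U :: 'u
  defines "\<rho> \<equiv> dual_step X U"
  shows "lyapunov (forward_step X U - \<gamma> *\<^sub>R adjoint K \<rho>) (U + (1 / (1 + \<omega>)) *\<^sub>R \<rho>)
       + (\<gamma> * \<omega>ran * (norm \<rho>)\<^sup>2 - \<gamma> * \<zeta> * (norm (adjoint K \<rho>))\<^sup>2)
       + \<omega> * (norm \<rho>)\<^sup>2 / (\<tau> * (1 + \<omega>))
       + \<gamma> * (norm (adjoint K (U - us)))\<^sup>2 + \<mu> * (norm (U + \<rho> - us))\<^sup>2
     \<le> lyapunov X U"
proof -
  define W where "W = U - us"
  define D where "D = U + \<rho> - us"
  define a where "a = (X - xs) - \<gamma> *\<^sub>R (gradf X - gradf xs)"
  have \<rho>: "\<rho> = D - W"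
    by (simp add: D_def W_def)
  have "(norm \<rho>)\<^sup>2 / \<tau> = (norm D)\<^sup>2 / \<tau> - 2 * ((W \<bullet> D) / \<tau>) + (norm W)\<^sup>2 / \<tau>"
  proof -
    have "(norm \<rho>)\<^sup>2 = (norm D)\<^sup>2 - 2 * (W \<bullet> D) + (norm W)\<^sup>2"
      unfolding \<rho> power2_norm_eq_inner by (simp add: inner_diff_left inner_diff_right inner_commute)
    then show ?thesis
      by (simp add: add_divide_distrib diff_divide_distrib)
  qed
  moreover have "\<gamma> * (norm (adjoint K \<rho>))\<^sup>2 = \<gamma> * (norm (adjoint K D))\<^sup>2
      - 2 * (\<gamma> * (adjoint K W \<bullet> adjoint K D)) + \<gamma> * (norm (adjoint K W))\<^sup>2"
  proof -
    have "(norm (adjoint K \<rho>))\<^sup>2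
        = (norm (adjoint K D))\<^sup>2 - 2 * (adjoint K W \<bullet> adjoint K D) + (norm (adjoint K W))\<^sup>2"
      unfolding \<rho> linear_diff[OF linear_adjoint_K] power2_norm_eq_inner
      by (simp add: inner_diff_left inner_diff_right inner_commute)
    then show ?thesis
      by (simp add: right_diff_distrib distrib_left)
  qed
  moreover have "(norm a)\<^sup>2 / \<gamma> \<le> (norm (X - xs))\<^sup>2 / \<gamma>"
    using gradient_step_nonexpansive[of \<gamma> X xs] gamma by (simp add: a_def divide_right_mono)
  moreover have "\<mu> * (norm D)\<^sup>2 = 2 * (\<mu> / 2 * (norm D)\<^sup>2)"
    by simp
  moreover have "lyapunov X U = (norm (X - xs))\<^sup>2 / \<gamma> + \<omega> * (norm W)\<^sup>2 / \<tau> + (norm W)\<^sup>2 / \<tau>"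
    by (simp add: lyapunov_def W_def distrib_right add_divide_distrib)
  ultimately show ?thesis
    using lyapunov_exact_step_eq[OF W_def D_def a_def]
      dual_step_monotone[OF W_def D_def[unfolded \<rho>_def] a_def] dual_step_variance_le[of \<rho>]
    unfolding W_def [symmetric] D_def [symmetric] by linarith
qed

lemma lyapunov_perturb:
  "lyapunov (X - \<gamma> *\<^sub>R adjoint K e) (U + (1 / (1 + \<omega>)) *\<^sub>R e)
    = lyapunov X U + ((2 / \<tau>) *\<^sub>R (U - us) - 2 *\<^sub>R K (X - xs)) \<bullet> e
      + \<gamma> * (norm (adjoint K e))\<^sup>2 + (norm e)\<^sup>2 / (\<tau> * (1 + \<omega>))"
proof -
  have "(norm (X - \<gamma> *\<^sub>R adjoint K e - xs))\<^sup>2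
      = (norm (X - xs))\<^sup>2 - 2 * \<gamma> * (K (X - xs) \<bullet> e) + \<gamma> * \<gamma> * (norm (adjoint K e))\<^sup>2"
    unfolding power2_norm_eq_inner
    by (simp add: inner_diff_left inner_diff_right inner_commute inner_adjoint_K
        linear_diff[OF K_lin] algebra_simps)
  then have x: "(norm (X - \<gamma> *\<^sub>R adjoint K e - xs))\<^sup>2 / \<gamma>
      = (norm (X - xs))\<^sup>2 / \<gamma> - 2 * (K (X - xs) \<bullet> e) + \<gamma> * (norm (adjoint K e))\<^sup>2"
    using gamma by (simp add: field_simps)
  have V: "(norm (V + (1 / (1 + \<omega>)) *\<^sub>R e))\<^sup>2
      = (norm V)\<^sup>2 + 2 / (1 + \<omega>) * (V \<bullet> e) + (norm e)\<^sup>2 / (1 + \<omega>)\<^sup>2" for V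
    unfolding power2_norm_eq_inner
    by (simp add: inner_add_left inner_add_right inner_commute power2_eq_square algebra_simps)
  have "U + (1 / (1 + \<omega>)) *\<^sub>R e - us = (U - us) + (1 / (1 + \<omega>)) *\<^sub>R e"
    by (simp add: algebra_simps)
  then have e: "(norm (U + (1 / (1 + \<omega>)) *\<^sub>R e - us))\<^sup>2
      = (norm (U - us))\<^sup>2 + 2 / (1 + \<omega>) * ((U - us) \<bullet> e) + (norm e)\<^sup>2 / (1 + \<omega>)\<^sup>2"
    by (simp only: V)
  have scale: "c / \<tau> * (n + 2 / c * b + m / c\<^sup>2) = c / \<tau> * n + 2 / \<tau> * b + m / (\<tau> * c)"
    if "0 < c" for c n b m :: real
    using that tau by (simp add: field_simps power2_eq_square)
  have u: "(1 + \<omega>) / \<tau> * (norm (U + (1 / (1 + \<omega>)) *\<^sub>R e - us))\<^sup>2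
      = (1 + \<omega>) / \<tau> * (norm (U - us))\<^sup>2 + 2 / \<tau> * ((U - us) \<bullet> e)
        + (norm e)\<^sup>2 / (\<tau> * (1 + \<omega>))"
    unfolding e by (rule scale) (use om_nonneg in simp)
  have "((2 / \<tau>) *\<^sub>R (U - us) - 2 *\<^sub>R K (X - xs)) \<bullet> e
      = 2 / \<tau> * ((U - us) \<bullet> e) - 2 * (K (X - xs) \<bullet> e)"
    by (simp add: inner_diff_left)
  with x u show ?thesis
    unfolding lyapunov_def by linarith
qed

lemma measurable_gradf [measurable]: "gradf \<in> borel_measurable borel"
  by (intro borel_measurable_continuous_onI lipschitz_on_continuous_on[OF lipschitz_grad])

lemma measurable_prox_dual [measurable]: "prox_dual \<in> borel_measurable borel"
proof -
  have "1-lipschitz_on UNIV prox_dual"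
    by (rule lipschitz_onI) (auto simp: dist_norm prox_dual_nonexpansive)
  then show ?thesis
    by (intro borel_measurable_continuous_onI lipschitz_on_continuous_on)
qed

lemma measurable_K [measurable]: "K \<in> borel_measurable borel"
  by (intro borel_measurable_continuous_onI linear_continuous_on bounded_linear_K)

lemma measurable_adjoint_K [measurable]: "adjoint K \<in> borel_measurable borel"
  using linear_adjoint_K
  by (intro borel_measurable_continuous_onI linear_continuous_on linear_conv_bounded_linear[THEN iffD1])

lemma measurable_forward_step [measurable]:
  assumes [measurable]: "X \<in> borel_measurable N" "U \<in> borel_measurable N"
  shows "(\<lambda>w. forward_step (X w) (U w)) \<in> borel_measurable N"
  unfolding forward_step_def by measurable

lemma measurable_dual_step [measurable]:
  assumes [measurable]: "X \<in> borel_measurable N" "U \<in> borel_measurable N"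
  shows "(\<lambda>w. dual_step (X w) (U w)) \<in> borel_measurable N"
  unfolding dual_step_def by measurable

section \<open>The dual problem\<close>

definition dual_obj :: "'u \<Rightarrow> ereal" where
  "dual_obj v = fenchel_conj (\<lambda>z. ereal (f z)) (- adjoint K v) + fenchel_conj h v"

lemma dual_obj_ge:
  obtains C where "dual_obj us = ereal C"
    "\<And>v. ereal (C + (norm (adjoint K (v - us)))\<^sup>2 / (2 * (Lf + 1)) + \<mu> / 2 * (norm (v - us))\<^sup>2)
      \<le> dual_obj v"
proof -
  obtain b where b: "fenchel_conj h us = ereal b"
    "\<And>q. ereal (b + K xs \<bullet> (q - us)) \<le> fenchel_conj h q"
    using fenchel_conj_h_saddle by blast
  define C where "C = gradf xs \<bullet> xs - f xs + b"
  have "dual_obj us = ereal C"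
    using fenchel_conj_grad[of xs] by (simp add: dual_obj_def gradf_saddle b(1) C_def)
  moreover have "ereal (C + (norm (adjoint K (v - us)))\<^sup>2 / (2 * (Lf + 1))
      + \<mu> / 2 * (norm (v - us))\<^sup>2) \<le> dual_obj v" for v
  proof -
    have "- adjoint K v - gradf xs = - adjoint K (v - us)"
      by (simp add: gradf_saddle linear_diff[OF linear_adjoint_K])
    then have "ereal ((- adjoint K v) \<bullet> xs - f xs + (norm (adjoint K (v - us)))\<^sup>2 / (2 * (Lf + 1)))
        \<le> fenchel_conj (\<lambda>z. ereal (f z)) (- adjoint K v)"
      using fenchel_conj_ge_quadratic[of "- adjoint K v" xs] by simp
    moreover have "ereal (b + K xs \<bullet> (v - us) + \<mu> / 2 * (norm (v - us))\<^sup>2) \<le> fenchel_conj h v"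
      by (rule strongly_convex_fun_subgradient[OF h_strong b(1) b(2)])
    moreover have "(- adjoint K v) \<bullet> xs + K xs \<bullet> (v - us) = gradf xs \<bullet> xs"
      by (simp add: gradf_saddle inner_commute inner_adjoint_K inner_diff_right)
    ultimately have "ereal (C + (norm (adjoint K (v - us)))\<^sup>2 / (2 * (Lf + 1))
          + \<mu> / 2 * (norm (v - us))\<^sup>2)
        = ereal ((- adjoint K v) \<bullet> xs - f xs + (norm (adjoint K (v - us)))\<^sup>2 / (2 * (Lf + 1)))
          + ereal (b + K xs \<bullet> (v - us) + \<mu> / 2 * (norm (v - us))\<^sup>2)"
      by (simp add: C_def)
    also have "\<dots> \<le> dual_obj v"
      unfolding dual_obj_def by (rule add_mono) fact+
    finally show ?thesis .
  qed
  ultimately show ?thesis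
    using that by blast
qed

lemma dual_obj_saddle_le: "dual_obj us \<le> dual_obj v"
proof -
  obtain C where C: "dual_obj us = ereal C"
    "ereal (C + (norm (adjoint K (v - us)))\<^sup>2 / (2 * (Lf + 1)) + \<mu> / 2 * (norm (v - us))\<^sup>2)
      \<le> dual_obj v"
    using dual_obj_ge by blast
  have "ereal C \<le> ereal (C + (norm (adjoint K (v - us)))\<^sup>2 / (2 * (Lf + 1))
      + \<mu> / 2 * (norm (v - us))\<^sup>2)"
    using L_nonneg mu_nonneg by simp
  also have "\<dots> \<le> dual_obj v"
    by (rule C(2))
  finally show ?thesis
    using C(1) by simp
qed

lemma dual_obj_minimizer_unique:
  assumes nondeg: "lambda_min (K \<circ> adjoint K) > 0 \<or> \<mu> > 0" and min: "dual_obj v \<le> dual_obj us"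
  shows "v = us"
proof -
  obtain C where C: "dual_obj us = ereal C"
    "ereal (C + (norm (adjoint K (v - us)))\<^sup>2 / (2 * (Lf + 1)) + \<mu> / 2 * (norm (v - us))\<^sup>2)
      \<le> dual_obj v"
    using dual_obj_ge by blast
  have "(norm (adjoint K (v - us)))\<^sup>2 / (2 * (Lf + 1)) + \<mu> / 2 * (norm (v - us))\<^sup>2 \<le> 0"
    using order_trans[OF C(2) min] C(1) by simp
  moreover have "0 \<le> (norm (adjoint K (v - us)))\<^sup>2 / (2 * (Lf + 1))" "0 \<le> \<mu> / 2 * (norm (v - us))\<^sup>2"
    using L_nonneg mu_nonneg by simp_all
  ultimately have zero: "(norm (adjoint K (v - us)))\<^sup>2 / (2 * (Lf + 1)) = 0"
    "\<mu> / 2 * (norm (v - us))\<^sup>2 = 0"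
    by linarith+
  from nondeg show "v = us"
  proof
    assume "lambda_min (K \<circ> adjoint K) > 0"
    moreover have "adjoint K (v - us) = adjoint K 0"
      using zero(1) L_nonneg by (simp add: linear_0[OF linear_adjoint_K])
    ultimately show "v = us"
      using inj_adjoint_if_lambda_min_pos[OF K_lin] by (auto dest: injD)
  next
    assume "\<mu> > 0"
    then show "v = us"
      using zero(2) by simp
  qed
qed

lemma dual_obj_argmin_iff:
  assumes "lambda_min (K \<circ> adjoint K) > 0 \<or> \<mu> > 0"
  shows "(\<forall>v'. dual_obj v \<le> dual_obj v') \<longleftrightarrow> v = us"
  using dual_obj_saddle_le dual_obj_minimizer_unique[OF assms] by blast

end

section \<open>Square-integrable random vectors\<close>

definition square_integrable :: "'w measure \<Rightarrow> ('w \<Rightarrow> 'a::euclidean_space) \<Rightarrow> bool" where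
  "square_integrable M Z \<longleftrightarrow> Z \<in> borel_measurable M \<and> integrable M (\<lambda>w. (norm (Z w))\<^sup>2)"

lemma square_integrable_measurable: "square_integrable M Z \<Longrightarrow> Z \<in> borel_measurable M"
  by (simp add: square_integrable_def)

lemma square_integrable_integrable:
  "square_integrable M Z \<Longrightarrow> integrable M (\<lambda>w. (norm (Z w))\<^sup>2)"
  by (simp add: square_integrable_def)

lemma square_integrable_bound:
  fixes Z :: "'w \<Rightarrow> 'a::euclidean_space" and Y :: "'w \<Rightarrow> 'b::euclidean_space"
  assumes Y: "square_integrable M Y" and Z [measurable]: "Z \<in> borel_measurable M"
    and le: "\<And>w. norm (Z w) \<le> c * norm (Y w)"
  shows "square_integrable M Z"
proof -
  have bd: "norm ((norm (Z w))\<^sup>2) \<le> norm (c\<^sup>2 * (norm (Y w))\<^sup>2)" for w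
  proof -
    have "(norm (Z w))\<^sup>2 \<le> (c * norm (Y w))\<^sup>2"
      using le[of w] by (simp add: power_mono)
    then show ?thesis
      by (simp add: power_mult_distrib)
  qed
  have "integrable M (\<lambda>w. c\<^sup>2 * (norm (Y w))\<^sup>2)"
    using square_integrable_integrable[OF Y] by simp
  then have "integrable M (\<lambda>w. (norm (Z w))\<^sup>2)"
    by (rule Bochner_Integration.integrable_bound[OF _ _ AE_I2[OF bd]]) measurable
  then show ?thesis
    by (simp add: square_integrable_def)
qed

lemma square_integrable_add:
  fixes Y Z :: "'w \<Rightarrow> 'a::euclidean_space"
  assumes Y: "square_integrable M Y" and Z: "square_integrable M Z"
  shows "square_integrable M (\<lambda>w. Y w + Z w)"
proof -
  note [measurable] = square_integrable_measurable[OF Y] square_integrable_measurable[OF Z]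
  have bd: "norm ((norm (Y w + Z w))\<^sup>2) \<le> norm (2 * (norm (Y w))\<^sup>2 + 2 * (norm (Z w))\<^sup>2)" for w
  proof -
    have "norm (Y w + Z w) \<le> norm (Y w) + norm (Z w)"
      by (rule norm_triangle_ineq)
    then have "(norm (Y w + Z w))\<^sup>2 \<le> (norm (Y w) + norm (Z w))\<^sup>2"
      by (simp add: power_mono)
    also have "\<dots> \<le> 2 * (norm (Y w))\<^sup>2 + 2 * (norm (Z w))\<^sup>2"
      using sum_squares_bound[of "norm (Y w)" "norm (Z w)"] by (simp add: power2_eq_square algebra_simps)
    finally show ?thesis
      by simp
  qed
  have "integrable M (\<lambda>w. 2 * (norm (Y w))\<^sup>2 + 2 * (norm (Z w))\<^sup>2)"
    using square_integrable_integrable[OF Y] square_integrable_integrable[OF Z] by simp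
  then have "integrable M (\<lambda>w. (norm (Y w + Z w))\<^sup>2)"
    by (rule Bochner_Integration.integrable_bound[OF _ _ AE_I2[OF bd]]) measurable
  then show ?thesis
    by (simp add: square_integrable_def)
qed

lemma square_integrable_scaleR:
  fixes Z :: "'w \<Rightarrow> 'a::euclidean_space"
  assumes Z: "square_integrable M Z"
  shows "square_integrable M (\<lambda>w. c *\<^sub>R Z w)"
  using square_integrable_measurable[OF Z] by (intro square_integrable_bound[OF Z, of _ "\<bar>c\<bar>"]) auto

lemma square_integrable_diff:
  fixes Y Z :: "'w \<Rightarrow> 'a::euclidean_space"
  assumes Y: "square_integrable M Y" and Z: "square_integrable M Z"
  shows "square_integrable M (\<lambda>w. Y w - Z w)"
  using square_integrable_add[OF Y square_integrable_scaleR[OF Z, of "-1"]] by simp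

lemma square_integrable_linear:
  fixes Z :: "'w \<Rightarrow> 'a::euclidean_space" and T :: "'a \<Rightarrow> 'b::euclidean_space"
  assumes Z: "square_integrable M Z" and T: "linear T"
  shows "square_integrable M (\<lambda>w. T (Z w))"
proof -
  have bl: "bounded_linear T"
    using T by (rule linear_conv_bounded_linear [THEN iffD1])
  then have [measurable]: "T \<in> borel_measurable borel"
    by (intro borel_measurable_continuous_onI linear_continuous_on)
  note [measurable] = square_integrable_measurable[OF Z]
  show ?thesis
    by (rule square_integrable_bound[OF Z _ onorm[OF bl]]) measurable
qed

lemma square_integrable_const:
  fixes c :: "'a::euclidean_space"
  assumes "finite_measure M"
  shows "square_integrable M (\<lambda>w. c)"
  using assms by (simp add: square_integrable_def finite_measure.integrable_const)

lemma integrable_inner_square_integrable: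
  fixes Y Z :: "'w \<Rightarrow> 'a::euclidean_space"
  assumes Y: "square_integrable M Y" and Z: "square_integrable M Z"
  shows "integrable M (\<lambda>w. Y w \<bullet> Z w)"
proof -
  note [measurable] = square_integrable_measurable[OF Y] square_integrable_measurable[OF Z]
  have bd: "norm (Y w \<bullet> Z w) \<le> norm ((norm (Y w))\<^sup>2 + (norm (Z w))\<^sup>2)" for w
  proof -
    have "\<bar>Y w \<bullet> Z w\<bar> \<le> norm (Y w) * norm (Z w)"
      by (rule Cauchy_Schwarz_ineq2)
    also have "\<dots> \<le> (norm (Y w))\<^sup>2 + (norm (Z w))\<^sup>2"
    proof -
      have "2 * norm (Y w) * norm (Z w) \<le> (norm (Y w))\<^sup>2 + (norm (Z w))\<^sup>2"
        by (rule sum_squares_bound)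
      moreover have "0 \<le> norm (Y w) * norm (Z w)"
        by simp
      ultimately show ?thesis
        by linarith
    qed
    finally show ?thesis
      by simp
  qed
  have "integrable M (\<lambda>w. (norm (Y w))\<^sup>2 + (norm (Z w))\<^sup>2)"
    using square_integrable_integrable[OF Y] square_integrable_integrable[OF Z] by simp
  then show ?thesis
    by (rule Bochner_Integration.integrable_bound[OF _ _ AE_I2[OF bd]]) measurable
qed

section \<open>The randomized iteration\<close>

locale randprox_iteration = randprox_setting f gradf Lf h K \<mu> \<gamma> \<tau> \<omega> \<omega>ran \<zeta> xs us
  for f :: "'x::euclidean_space \<Rightarrow> real" and gradf :: "'x \<Rightarrow> 'x" and Lf :: real
    and h :: "'u::euclidean_space \<Rightarrow> ereal" and K :: "'x \<Rightarrow> 'u"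
    and \<mu> \<gamma> \<tau> \<omega> \<omega>ran \<zeta> :: real and xs :: 'x and us :: 'u +
  fixes M :: "'w measure" and x0 :: 'x and u0 :: 'u
    and x xhat :: "nat \<Rightarrow> 'w \<Rightarrow> 'x" and u r Rr :: "nat \<Rightarrow> 'w \<Rightarrow> 'u"
    and F :: "nat \<Rightarrow> 'w measure"
  assumes prob: "prob_space M"
    and x_0: "\<And>w. x 0 w = x0" and u_0: "\<And>w. u 0 w = u0"
    and xhat_eq: "\<And>t w. xhat t w = x t w - \<gamma> *\<^sub>R gradf (x t w) - \<gamma> *\<^sub>R adjoint K (u t w)"
    and r_eq: "\<And>t w. r t w
      = prox (\<lambda>v. ereal \<tau> * fenchel_conj h v) (u t w + \<tau> *\<^sub>R K (xhat t w)) - u t w"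
    and u_step: "\<And>t w. u (Suc t) w = u t w + (1 / (1 + \<omega>)) *\<^sub>R Rr t w"
    and x_step: "\<And>t w. x (Suc t) w
      = xhat t w - (\<gamma> * (1 + \<omega>)) *\<^sub>R (adjoint K (u (Suc t) w) - adjoint K (u t w))"
    and F_eq: "\<And>t. F t = sigma (space M)
      (\<Union>s\<in>{..t}. {(\<lambda>w. (x s w, u s w)) -` A \<inter> space M | A. A \<in> sets borel})"
    and Rr_meas: "\<And>t. Rr t \<in> borel_measurable M"
    and unbiased: "\<And>t b. b \<in> Basis \<Longrightarrow>
      AE w in M. real_cond_exp M (F t) (\<lambda>w. Rr t w \<bullet> b) w = r t w \<bullet> b"
    and var1: "\<And>t. AE w in M.
      nn_cond_exp M (F t) (\<lambda>w. ennreal ((norm (Rr t w - r t w))\<^sup>2)) w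
        \<le> ennreal (\<omega> * (norm (r t w))\<^sup>2)"
    and var2: "\<And>t. AE w in M.
      nn_cond_exp M (F t) (\<lambda>w. ennreal ((norm (adjoint K (Rr t w - r t w)))\<^sup>2)) w
        + ennreal (\<zeta> * (norm (adjoint K (r t w)))\<^sup>2)
        \<le> ennreal (\<omega>ran * (norm (r t w))\<^sup>2)"
begin

lemma xhat_eq_forward_step: "xhat t w = forward_step (x t w) (u t w)"
  unfolding xhat_eq forward_step_def ..

lemma r_eq_dual_step: "r t w = dual_step (x t w) (u t w)"
  unfolding r_eq dual_step_def prox_dual_def xhat_eq_forward_step ..

lemma measurable_iterates: "x t \<in> borel_measurable M \<and> u t \<in> borel_measurable M"
proof (induction t)
  case 0
  then show ?case
    by (simp add: x_0[abs_def] u_0[abs_def])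
next
  case (Suc t)
  then have [measurable]: "x t \<in> borel_measurable M" "u t \<in> borel_measurable M"
    by auto
  note [measurable] = Rr_meas[of t]
  have [measurable]: "u (Suc t) \<in> borel_measurable M"
    unfolding u_step[abs_def] by measurable
  moreover have "x (Suc t) \<in> borel_measurable M"
    unfolding x_step[abs_def] xhat_eq_forward_step by measurable
  ultimately show ?case
    by simp
qed

lemma measurable_x [measurable]: "x t \<in> borel_measurable M"
  and measurable_u [measurable]: "u t \<in> borel_measurable M"
  using measurable_iterates by blast+

lemma measurable_r [measurable]: "r t \<in> borel_measurable M"
  unfolding r_eq_dual_step[abs_def] by measurable

definition history :: "nat \<Rightarrow> 'w set set" where
  "history t = (\<Union>s\<in>{..t}. {(\<lambda>w. (x s w, u s w)) -` A \<inter> space M | A. A \<in> sets borel})"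

lemma history_subset_sets: "history t \<subseteq> sets M"
proof -
  have "(\<lambda>w. (x s w, u s w)) -` A \<inter> space M \<in> sets M" if "A \<in> sets borel" for s A
  proof -
    have "(\<lambda>w. (x s w, u s w)) \<in> borel_measurable M"
      by measurable
    then show ?thesis
      using that by (rule measurable_sets)
  qed
  then show ?thesis
    unfolding history_def by auto
qed

lemma history_subset_Pow: "history t \<subseteq> Pow (space M)"
  using history_subset_sets sets.sets_into_space by blast

lemma sets_F: "sets (F t) = sigma_sets (space M) (history t)"
  unfolding F_eq history_def[symmetric] using history_subset_Pow by simp

lemma space_F: "space (F t) = space M"
  unfolding F_eq history_def[symmetric] using history_subset_Pow by simp

lemma sigma_finite_subalgebra_F: "sigma_finite_subalgebra M (F t)"
proof -
  interpret prob_space M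
    by (rule prob)
  have "subalgebra M (F t)"
    unfolding subalgebra_def space_F sets_F
    using history_subset_sets by (simp add: sets.sigma_sets_subset)
  then have "finite_measure_subalgebra M (F t)"
    by unfold_locales
  then show ?thesis
    by (rule finite_measure_subalgebra_is_sigma_finite)
qed

lemma measurable_F_pair: "(\<lambda>w. (x t w, u t w)) \<in> borel_measurable (F t)"
proof (rule measurableI)
  fix A :: "('x \<times> 'u) set"
  assume "A \<in> sets borel"
  then have "(\<lambda>w. (x t w, u t w)) -` A \<inter> space M \<in> history t"
    unfolding history_def by blast
  then show "(\<lambda>w. (x t w, u t w)) -` A \<inter> space (F t) \<in> sets (F t)"
    unfolding space_F sets_F by (rule sigma_sets.Basic)
qed simp

lemma measurable_F_fun_iterates:
  assumes "g \<in> borel_measurable (borel :: ('x \<times> 'u) measure)"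
  shows "(\<lambda>w. g (x t w, u t w)) \<in> borel_measurable (F t)"
  using measurable_compose[OF measurable_F_pair assms] by (simp add: comp_def)


abbreviation noise :: "nat \<Rightarrow> 'w \<Rightarrow> 'u" where
  "noise t w \<equiv> Rr t w - r t w"

text \<open>Unbiasedness of \<open>\<R>\<^sup>t\<close>: the noise is orthogonal in \<open>L\<^sup>2\<close> to everything known at time \<open>t\<close>.\<close>

lemma integral_inner_noise_eq_0:
  fixes Y :: "'w \<Rightarrow> 'u"
  assumes Y_F: "Y \<in> borel_measurable (F t)" and Y: "square_integrable M Y"
    and r: "square_integrable M (r t)" and e: "square_integrable M (noise t)"
  shows "integrable M (\<lambda>w. Y w \<bullet> noise t w)" "(\<integral>w. Y w \<bullet> noise t w \<partial>M) = 0"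
proof -
  interpret sigma_finite_subalgebra M "F t"
    by (rule sigma_finite_subalgebra_F)
  show "integrable M (\<lambda>w. Y w \<bullet> noise t w)"
    by (rule integrable_inner_square_integrable[OF Y e])
  have R: "square_integrable M (Rr t)"
    using square_integrable_add[OF e r] by simp
  note [measurable] = square_integrable_measurable[OF Y] Rr_meas[of t]
  have coord: "integrable M (\<lambda>w. (Y w \<bullet> b) * (Rr t w \<bullet> b))"
    "integrable M (\<lambda>w. (Y w \<bullet> b) * (r t w \<bullet> b))"
    "(\<integral>w. (Y w \<bullet> b) * (Rr t w \<bullet> b) \<partial>M) = (\<integral>w. (Y w \<bullet> b) * (r t w \<bullet> b) \<partial>M)"
    if b: "b \<in> Basis" for b
  proof -
    have Yb: "square_integrable M (\<lambda>w. (Y w \<bullet> b) *\<^sub>R b)"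
      by (rule square_integrable_bound[OF Y, of _ 1]) (use b in \<open>auto simp: Basis_le_norm\<close>)
    show iR: "integrable M (\<lambda>w. (Y w \<bullet> b) * (Rr t w \<bullet> b))"
      using integrable_inner_square_integrable[OF Yb R] by (simp add: inner_commute)
    show "integrable M (\<lambda>w. (Y w \<bullet> b) * (r t w \<bullet> b))"
      using integrable_inner_square_integrable[OF Yb r] by (simp add: inner_commute)
    have Yb_F: "(\<lambda>w. Y w \<bullet> b) \<in> borel_measurable (F t)"
      using Y_F by measurable
    have "(\<integral>w. (Y w \<bullet> b) * real_cond_exp M (F t) (\<lambda>w. Rr t w \<bullet> b) w \<partial>M)
        = (\<integral>w. (Y w \<bullet> b) * (Rr t w \<bullet> b) \<partial>M)"
      by (rule real_cond_exp_intg(2)[OF iR Yb_F]) measurable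
    moreover have "(\<integral>w. (Y w \<bullet> b) * real_cond_exp M (F t) (\<lambda>w. Rr t w \<bullet> b) w \<partial>M)
        = (\<integral>w. (Y w \<bullet> b) * (r t w \<bullet> b) \<partial>M)"
    proof (rule integral_cong_AE)
      show "AE w in M. (Y w \<bullet> b) * real_cond_exp M (F t) (\<lambda>w. Rr t w \<bullet> b) w
          = (Y w \<bullet> b) * (r t w \<bullet> b)"
        using unbiased[OF b, of t] by eventually_elim simp
    qed (auto simp: borel_measurable_cond_exp2)
    ultimately show "(\<integral>w. (Y w \<bullet> b) * (Rr t w \<bullet> b) \<partial>M) = (\<integral>w. (Y w \<bullet> b) * (r t w \<bullet> b) \<partial>M)"
      by simp
  qed
  have "(\<lambda>w. Y w \<bullet> noise t w)
      = (\<lambda>w. \<Sum>b\<in>Basis. (Y w \<bullet> b) * (Rr t w \<bullet> b) - (Y w \<bullet> b) * (r t w \<bullet> b))"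
    by (subst euclidean_inner) (simp add: inner_diff_left algebra_simps)
  then show "(\<integral>w. Y w \<bullet> noise t w \<partial>M) = 0"
    using coord by (simp add: integral_sum integral_diff)
qed

lemma noise_second_moment_le:
  assumes r: "square_integrable M (r t)"
  shows "square_integrable M (noise t)"
    "(\<integral>w. (norm (noise t w))\<^sup>2 \<partial>M) \<le> \<omega> * (\<integral>w. (norm (r t w))\<^sup>2 \<partial>M)"
proof -
  interpret sigma_finite_subalgebra M "F t"
    by (rule sigma_finite_subalgebra_F)
  note [measurable] = Rr_meas[of t]
  have ir: "integrable M (\<lambda>w. \<omega> * (norm (r t w))\<^sup>2)"
    using square_integrable_integrable[OF r] by simp
  have "(\<integral>\<^sup>+w. ennreal ((norm (noise t w))\<^sup>2) \<partial>M)
      = (\<integral>\<^sup>+w. (\<lambda>_. 1) w * nn_cond_exp M (F t) (\<lambda>w. ennreal ((norm (noise t w))\<^sup>2)) w \<partial>M)"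
    by (subst nn_cond_exp_intg) auto
  also have "\<dots> \<le> (\<integral>\<^sup>+w. ennreal (\<omega> * (norm (r t w))\<^sup>2) \<partial>M)"
    using var1[of t] by (intro nn_integral_mono_AE) auto
  also have "\<dots> = ennreal (\<integral>w. \<omega> * (norm (r t w))\<^sup>2 \<partial>M)"
    using om_nonneg by (intro nn_integral_eq_integral[OF ir]) auto
  finally have le: "(\<integral>\<^sup>+w. ennreal ((norm (noise t w))\<^sup>2) \<partial>M)
      \<le> ennreal (\<integral>w. \<omega> * (norm (r t w))\<^sup>2 \<partial>M)" .
  have ie: "integrable M (\<lambda>w. (norm (noise t w))\<^sup>2)"
    by (rule integrableI_nonneg) (use le in \<open>auto simp: top.not_eq_extremum intro: le_less_trans\<close>)
  then show "square_integrable M (noise t)"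
    by (simp add: square_integrable_def)
  have "(\<integral>w. \<omega> * (norm (r t w))\<^sup>2 \<partial>M) \<ge> 0"
    using om_nonneg by simp
  with le show "(\<integral>w. (norm (noise t w))\<^sup>2 \<partial>M) \<le> \<omega> * (\<integral>w. (norm (r t w))\<^sup>2 \<partial>M)"
    by (simp add: nn_integral_eq_integral[OF ie] ennreal_le_iff)
qed

lemma adjoint_noise_second_moment_le:
  assumes r: "square_integrable M (r t)" and e: "square_integrable M (noise t)"
  shows "(\<integral>w. (norm (adjoint K (noise t w)))\<^sup>2 \<partial>M) + (\<integral>w. \<zeta> * (norm (adjoint K (r t w)))\<^sup>2 \<partial>M)
    \<le> (\<integral>w. \<omega>ran * (norm (r t w))\<^sup>2 \<partial>M)"
proof -
  interpret sigma_finite_subalgebra M "F t"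
    by (rule sigma_finite_subalgebra_F)
  note [measurable] = Rr_meas[of t]
  have i1: "integrable M (\<lambda>w. (norm (adjoint K (noise t w)))\<^sup>2)"
    by (rule square_integrable_integrable[OF square_integrable_linear[OF e linear_adjoint_K]])
  have i2: "integrable M (\<lambda>w. \<zeta> * (norm (adjoint K (r t w)))\<^sup>2)"
    using square_integrable_integrable[OF square_integrable_linear[OF r linear_adjoint_K]] by simp
  have i3: "integrable M (\<lambda>w. \<omega>ran * (norm (r t w))\<^sup>2)"
    using square_integrable_integrable[OF r] by simp
  have "ennreal (\<integral>w. (norm (adjoint K (noise t w)))\<^sup>2 \<partial>M)
      + ennreal (\<integral>w. \<zeta> * (norm (adjoint K (r t w)))\<^sup>2 \<partial>M)
      = (\<integral>\<^sup>+w. ennreal ((norm (adjoint K (noise t w)))\<^sup>2) \<partial>M)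
        + (\<integral>\<^sup>+w. ennreal (\<zeta> * (norm (adjoint K (r t w)))\<^sup>2) \<partial>M)"
    using zeta by (simp add: nn_integral_eq_integral[OF i1] nn_integral_eq_integral[OF i2])
  also have "(\<integral>\<^sup>+w. ennreal ((norm (adjoint K (noise t w)))\<^sup>2) \<partial>M)
      = (\<integral>\<^sup>+w. (\<lambda>_. 1) w * nn_cond_exp M (F t) (\<lambda>w. ennreal ((norm (adjoint K (noise t w)))\<^sup>2)) w \<partial>M)"
    by (subst nn_cond_exp_intg) auto
  also have "\<dots> + (\<integral>\<^sup>+w. ennreal (\<zeta> * (norm (adjoint K (r t w)))\<^sup>2) \<partial>M)
      = (\<integral>\<^sup>+w. nn_cond_exp M (F t) (\<lambda>w. ennreal ((norm (adjoint K (noise t w)))\<^sup>2)) w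
          + ennreal (\<zeta> * (norm (adjoint K (r t w)))\<^sup>2) \<partial>M)"
    by (subst nn_integral_add) auto
  also have "\<dots> \<le> (\<integral>\<^sup>+w. ennreal (\<omega>ran * (norm (r t w))\<^sup>2) \<partial>M)"
    using var2[of t] by (intro nn_integral_mono_AE) auto
  also have "\<dots> = ennreal (\<integral>w. \<omega>ran * (norm (r t w))\<^sup>2 \<partial>M)"
    using omran_nonneg by (intro nn_integral_eq_integral[OF i3]) auto
  finally show ?thesis
    using zeta omran_nonneg
    by (simp add: ennreal_plus[symmetric] ennreal_le_iff del: ennreal_plus)
qed

text \<open>The next iterates if \<open>\<R>\<^sup>t\<close> were the identity.\<close>

definition x_exact :: "nat \<Rightarrow> 'w \<Rightarrow> 'x" where
  "x_exact t w = forward_step (x t w) (u t w) - \<gamma> *\<^sub>R adjoint K (r t w)"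

definition u_exact :: "nat \<Rightarrow> 'w \<Rightarrow> 'u" where
  "u_exact t w = u t w + (1 / (1 + \<omega>)) *\<^sub>R r t w"

lemma x_Suc_eq: "x (Suc t) w = x_exact t w - \<gamma> *\<^sub>R adjoint K (noise t w)"
proof -
  have "adjoint K (u (Suc t) w) - adjoint K (u t w) = (1 / (1 + \<omega>)) *\<^sub>R adjoint K (Rr t w)"
    by (simp add: u_step linear_diff[OF linear_adjoint_K, symmetric] linear_scale[OF linear_adjoint_K])
  then have "(\<gamma> * (1 + \<omega>)) *\<^sub>R (adjoint K (u (Suc t) w) - adjoint K (u t w))
      = \<gamma> *\<^sub>R adjoint K (Rr t w)"
    using om_nonneg by simp
  then show ?thesis
    unfolding x_step xhat_eq_forward_step x_exact_def
    by (simp add: linear_diff[OF linear_adjoint_K] algebra_simps)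
qed

lemma u_Suc_eq: "u (Suc t) w = u_exact t w + (1 / (1 + \<omega>)) *\<^sub>R noise t w"
  unfolding u_step u_exact_def by (simp add: algebra_simps)

lemma measurable_F_exact:
  "x_exact t \<in> borel_measurable (F t)" "u_exact t \<in> borel_measurable (F t)"
proof -
  have [measurable]: "fst \<in> borel_measurable (borel :: ('x \<times> 'u) measure)"
    "snd \<in> borel_measurable (borel :: ('x \<times> 'u) measure)"
    by (intro borel_measurable_continuous_onI continuous_on_fst continuous_on_snd continuous_on_id)+
  have "(\<lambda>p. forward_step (fst p) (snd p) - \<gamma> *\<^sub>R adjoint K (dual_step (fst p) (snd p)))
      \<in> borel_measurable borel"
    by measurable
  from measurable_F_fun_iterates[OF this] show "x_exact t \<in> borel_measurable (F t)"
    unfolding x_exact_def[abs_def] r_eq_dual_step by simp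
  have "(\<lambda>p. snd p + (1 / (1 + \<omega>)) *\<^sub>R dual_step (fst p) (snd p)) \<in> borel_measurable borel"
    by measurable
  from measurable_F_fun_iterates[OF this] show "u_exact t \<in> borel_measurable (F t)"
    unfolding u_exact_def[abs_def] r_eq_dual_step by simp
qed

lemma square_integrable_exact:
  assumes x: "square_integrable M (\<lambda>w. x t w - xs)" and u: "square_integrable M (\<lambda>w. u t w - us)"
  shows "square_integrable M (r t)" "square_integrable M (\<lambda>w. x_exact t w - xs)"
    "square_integrable M (\<lambda>w. u_exact t w - us)"
proof -
  have grad: "square_integrable M (\<lambda>w. gradf (x t w) - gradf xs)"
    by (rule square_integrable_bound[OF x]) (measurable, rule norm_grad_diff_le)
  have fwd: "square_integrable M (\<lambda>w. forward_step (x t w) (u t w) - xs)"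
    unfolding forward_step_minus_saddle
    by (intro square_integrable_diff square_integrable_scaleR
        square_integrable_linear[OF _ linear_adjoint_K] x u grad)
  have "square_integrable M (\<lambda>w. prox_dual (u t w + \<tau> *\<^sub>R K (forward_step (x t w) (u t w))) - us)"
  proof (rule square_integrable_bound)
    show "square_integrable M (\<lambda>w. (u t w - us) + \<tau> *\<^sub>R K (forward_step (x t w) (u t w) - xs))"
      by (intro square_integrable_add square_integrable_scaleR square_integrable_linear[OF _ K_lin]
          u fwd)
    show "norm (prox_dual (u t w + \<tau> *\<^sub>R K (forward_step (x t w) (u t w))) - us)
        \<le> 1 * norm ((u t w - us) + \<tau> *\<^sub>R K (forward_step (x t w) (u t w) - xs))" for w
      using norm_prox_dual_step_le by simp
  qed measurable
  then have "square_integrable M (\<lambda>w. (prox_dual (u t w + \<tau> *\<^sub>R K (forward_step (x t w) (u t w))) - us)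
      - (u t w - us))"
    using u by (rule square_integrable_diff)
  then show r: "square_integrable M (r t)"
    unfolding r_eq_dual_step dual_step_def by simp
  have "square_integrable M (\<lambda>w. (forward_step (x t w) (u t w) - xs) - \<gamma> *\<^sub>R adjoint K (r t w))"
    by (intro square_integrable_diff square_integrable_scaleR
        square_integrable_linear[OF _ linear_adjoint_K] fwd r)
  then show "square_integrable M (\<lambda>w. x_exact t w - xs)"
    by (simp add: x_exact_def algebra_simps)
  have "square_integrable M (\<lambda>w. (u t w - us) + (1 / (1 + \<omega>)) *\<^sub>R r t w)"
    by (intro square_integrable_add square_integrable_scaleR u r)
  then show "square_integrable M (\<lambda>w. u_exact t w - us)"
    by (simp add: u_exact_def algebra_simps)
qed

lemma integral_lyapunov_Suc:
  assumes x: "square_integrable M (\<lambda>w. x t w - xs)" and u: "square_integrable M (\<lambda>w. u t w - us)"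
  shows "(\<integral>w. lyapunov (x (Suc t) w) (u (Suc t) w) \<partial>M)
    = (\<integral>w. lyapunov (x_exact t w) (u_exact t w) \<partial>M)
      + \<gamma> * (\<integral>w. (norm (adjoint K (noise t w)))\<^sup>2 \<partial>M)
      + (\<integral>w. (norm (noise t w))\<^sup>2 \<partial>M) / (\<tau> * (1 + \<omega>))"
proof -
  note exact = square_integrable_exact[OF x u]
  note e = noise_second_moment_le(1)[OF exact(1)]
  define Y where "Y w = (2 / \<tau>) *\<^sub>R (u_exact t w - us) - 2 *\<^sub>R K (x_exact t w - xs)" for w
  note [measurable] = measurable_F_exact
  have Y_F: "Y \<in> borel_measurable (F t)"
    unfolding Y_def[abs_def] by measurable
  have "square_integrable M Y"
    unfolding Y_def[abs_def]
    by (intro square_integrable_diff square_integrable_scaleR square_integrable_linear[OF _ K_lin]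
        exact(2,3))
  note cross = integral_inner_noise_eq_0[OF Y_F this exact(1) e]
  have "lyapunov (x (Suc t) w) (u (Suc t) w) = lyapunov (x_exact t w) (u_exact t w)
      + Y w \<bullet> noise t w + \<gamma> * (norm (adjoint K (noise t w)))\<^sup>2
      + (norm (noise t w))\<^sup>2 / (\<tau> * (1 + \<omega>))" for w
    unfolding x_Suc_eq u_Suc_eq lyapunov_perturb Y_def ..
  moreover have "integrable M (\<lambda>w. lyapunov (x_exact t w) (u_exact t w))"
    unfolding lyapunov_def using exact(2,3) by (simp add: square_integrable_integrable)
  ultimately show ?thesis
    using cross square_integrable_integrable[OF e]
      square_integrable_integrable[OF square_integrable_linear[OF e linear_adjoint_K]]
    by simp
qed

lemma expected_lyapunov_decrease:
  assumes x: "square_integrable M (\<lambda>w. x t w - xs)" and u: "square_integrable M (\<lambda>w. u t w - us)"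
  shows "(\<integral>w. lyapunov (x (Suc t) w) (u (Suc t) w) \<partial>M)
      + (\<integral>w. \<gamma> * (norm (adjoint K (u t w - us)))\<^sup>2 + \<mu> * (norm (u t w + r t w - us))\<^sup>2 \<partial>M)
    \<le> (\<integral>w. lyapunov (x t w) (u t w) \<partial>M)"
proof -
  note exact = square_integrable_exact[OF x u]
  note r = exact(1)
  note e = noise_second_moment_le[OF r]
  define S where "S w = (\<gamma> * \<omega>ran * (norm (r t w))\<^sup>2 - \<gamma> * \<zeta> * (norm (adjoint K (r t w)))\<^sup>2)
    + \<omega> * (norm (r t w))\<^sup>2 / (\<tau> * (1 + \<omega>))" for w
  define G where "G w = \<gamma> * (norm (adjoint K (u t w - us)))\<^sup>2 + \<mu> * (norm (u t w + r t w - us))\<^sup>2"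
    for w
  have ir: "integrable M (\<lambda>w. (norm (r t w))\<^sup>2)"
    and iKr: "integrable M (\<lambda>w. (norm (adjoint K (r t w)))\<^sup>2)"
    using square_integrable_integrable r square_integrable_linear[OF r linear_adjoint_K] by blast+
  have iL: "integrable M (\<lambda>w. lyapunov (x_exact t w) (u_exact t w))"
    and iL': "integrable M (\<lambda>w. lyapunov (x t w) (u t w))"
    unfolding lyapunov_def using exact(2,3) x u by (simp_all add: square_integrable_integrable)
  have iS: "integrable M S"
    unfolding S_def using ir iKr by simp
  have "square_integrable M (\<lambda>w. u t w + r t w - us)"
    using square_integrable_add[OF u r] by (simp add: algebra_simps)
  then have iG: "integrable M G"
    unfolding G_def
    using square_integrable_linear[OF u linear_adjoint_K] by (simp add: square_integrable_integrable)
  have "lyapunov (x_exact t w) (u_exact t w) + S w + G w \<le> lyapunov (x t w) (u t w)" for w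
    using lyapunov_decrease[of "x t w" "u t w"]
    unfolding S_def G_def x_exact_def u_exact_def r_eq_dual_step by (simp add: algebra_simps)
  then have "(\<integral>w. lyapunov (x_exact t w) (u_exact t w) + S w + G w \<partial>M)
      \<le> (\<integral>w. lyapunov (x t w) (u t w) \<partial>M)"
    using iL iS iG iL' by (intro integral_mono) auto
  moreover have "(\<integral>w. lyapunov (x_exact t w) (u_exact t w) + S w + G w \<partial>M)
      = (\<integral>w. lyapunov (x_exact t w) (u_exact t w) \<partial>M) + integral\<^sup>L M S + integral\<^sup>L M G"
    using iL iS iG by simp
  moreover have "integral\<^sup>L M S = \<gamma> * ((\<integral>w. \<omega>ran * (norm (r t w))\<^sup>2 \<partial>M)
      - (\<integral>w. \<zeta> * (norm (adjoint K (r t w)))\<^sup>2 \<partial>M))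
      + \<omega> * (\<integral>w. (norm (r t w))\<^sup>2 \<partial>M) / (\<tau> * (1 + \<omega>))"
    unfolding S_def using ir iKr by (simp add: algebra_simps)
  moreover have "\<gamma> * (\<integral>w. (norm (adjoint K (noise t w)))\<^sup>2 \<partial>M)
      \<le> \<gamma> * ((\<integral>w. \<omega>ran * (norm (r t w))\<^sup>2 \<partial>M) - (\<integral>w. \<zeta> * (norm (adjoint K (r t w)))\<^sup>2 \<partial>M))"
    using adjoint_noise_second_moment_le[OF r e(1)] gamma by (intro mult_left_mono) auto
  moreover have "(\<integral>w. (norm (noise t w))\<^sup>2 \<partial>M) / (\<tau> * (1 + \<omega>))
      \<le> \<omega> * (\<integral>w. (norm (r t w))\<^sup>2 \<partial>M) / (\<tau> * (1 + \<omega>))"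
    using e(2) tau om_nonneg by (intro divide_right_mono) auto
  ultimately show ?thesis
    unfolding integral_lyapunov_Suc[OF x u] G_def [symmetric] by linarith
qed

lemma integral_dual_error_Suc:
  assumes x: "square_integrable M (\<lambda>w. x t w - xs)" and u: "square_integrable M (\<lambda>w. u t w - us)"
  shows "(\<integral>w. (norm (u (Suc t) w - us))\<^sup>2 \<partial>M)
    = (\<integral>w. (norm (u_exact t w - us))\<^sup>2 \<partial>M) + (\<integral>w. (norm (noise t w))\<^sup>2 \<partial>M) / (1 + \<omega>)\<^sup>2"
proof -
  note exact = square_integrable_exact[OF x u]
  note e = noise_second_moment_le(1)[OF exact(1)]
  define B where "B w = u_exact t w - us" for w
  have B: "square_integrable M B"
    using exact(3) by (simp add: B_def[abs_def])
  note [measurable] = measurable_F_exact(2)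
  have "(\<lambda>w. (2 / (1 + \<omega>)) *\<^sub>R B w) \<in> borel_measurable (F t)"
    unfolding B_def[abs_def] by measurable
  note cross = integral_inner_noise_eq_0[OF this square_integrable_scaleR[OF B] exact(1) e]
  have expand: "(norm (V + (1 / (1 + \<omega>)) *\<^sub>R E))\<^sup>2
      = (norm V)\<^sup>2 + ((2 / (1 + \<omega>)) *\<^sub>R V) \<bullet> E + (norm E)\<^sup>2 / (1 + \<omega>)\<^sup>2" for V E :: 'u
    unfolding power2_norm_eq_inner
    by (simp add: inner_add_left inner_add_right inner_commute power2_eq_square algebra_simps)
  have "u (Suc t) w - us = B w + (1 / (1 + \<omega>)) *\<^sub>R noise t w" for w
    by (simp add: u_Suc_eq B_def algebra_simps)
  then have "(norm (u (Suc t) w - us))\<^sup>2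
      = (norm (B w))\<^sup>2 + ((2 / (1 + \<omega>)) *\<^sub>R B w) \<bullet> noise t w + (norm (noise t w))\<^sup>2 / (1 + \<omega>)\<^sup>2"
    for w
    by (simp only: expand)
  then show ?thesis
    using cross square_integrable_integrable[OF B] square_integrable_integrable[OF e]
    by (simp add: B_def)
qed

lemma expected_dual_error_recursion:
  assumes x: "square_integrable M (\<lambda>w. x t w - xs)" and u: "square_integrable M (\<lambda>w. u t w - us)"
  shows "(1 + \<omega>) * (\<integral>w. (norm (u (Suc t) w - us))\<^sup>2 \<partial>M)
    \<le> (\<integral>w. \<omega> * (norm (u t w - us))\<^sup>2 + (norm (u t w + r t w - us))\<^sup>2 \<partial>M)"
proof -
  note exact = square_integrable_exact[OF x u]
  note e = noise_second_moment_le[OF exact(1)]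
  have o: "0 < 1 + \<omega>"
    using om_nonneg by simp
  have "(\<integral>w. (norm (u (Suc t) w - us))\<^sup>2 \<partial>M)
      \<le> (\<integral>w. (norm (u_exact t w - us))\<^sup>2 \<partial>M) + \<omega> * (\<integral>w. (norm (r t w))\<^sup>2 \<partial>M) / (1 + \<omega>)\<^sup>2"
    unfolding integral_dual_error_Suc[OF x u] using e(2) o by (simp add: divide_right_mono)
  then have "(1 + \<omega>) * (\<integral>w. (norm (u (Suc t) w - us))\<^sup>2 \<partial>M)
      \<le> (1 + \<omega>) * ((\<integral>w. (norm (u_exact t w - us))\<^sup>2 \<partial>M)
        + \<omega> * (\<integral>w. (norm (r t w))\<^sup>2 \<partial>M) / (1 + \<omega>)\<^sup>2)"
    using o by (intro mult_left_mono) auto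
  also have "\<dots> = (1 + \<omega>) * (\<integral>w. (norm (u_exact t w - us))\<^sup>2 \<partial>M)
      + \<omega> * (\<integral>w. (norm (r t w))\<^sup>2 \<partial>M) / (1 + \<omega>)"
  proof -
    have "c * (a + b / c\<^sup>2) = c * a + b / c" if "0 < c" for a b c :: real
      using that by (simp add: field_simps power2_eq_square)
    then show ?thesis
      using o .
  qed
  also have "\<dots> = (\<integral>w. (1 + \<omega>) * (norm (u_exact t w - us))\<^sup>2 + \<omega> * (norm (r t w))\<^sup>2 / (1 + \<omega>) \<partial>M)"
    using square_integrable_integrable[OF exact(3)] square_integrable_integrable[OF exact(1)] by simp
  also have "\<dots> = (\<integral>w. \<omega> * (norm (u t w - us))\<^sup>2 + (norm (u t w + r t w - us))\<^sup>2 \<partial>M)"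
  proof (rule Bochner_Integration.integral_cong [OF refl])
    fix w
    have e: "u t w + r t w - us = (u t w - us) + r t w"
      "u_exact t w - us = (u t w - us) + (1 / (1 + \<omega>)) *\<^sub>R r t w"
      by (simp_all add: u_exact_def algebra_simps)
    show "(1 + \<omega>) * (norm (u_exact t w - us))\<^sup>2 + \<omega> * (norm (r t w))\<^sup>2 / (1 + \<omega>)
        = \<omega> * (norm (u t w - us))\<^sup>2 + (norm (u t w + r t w - us))\<^sup>2"
      unfolding e using power2_norm_add_scaleR_inverse[OF o, of "u t w - us" "r t w"]
      by (simp only: add_diff_cancel_left')
  qed
  finally show ?thesis .
qed

lemma square_integrable_iterates:
  "square_integrable M (\<lambda>w. x t w - xs) \<and> square_integrable M (\<lambda>w. u t w - us)"
proof (induction t)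
  case 0
  have "finite_measure M"
    using prob by (simp add: prob_space_def)
  then show ?case
    by (simp add: x_0 u_0 square_integrable_const)
next
  case (Suc t)
  then have x: "square_integrable M (\<lambda>w. x t w - xs)" and u: "square_integrable M (\<lambda>w. u t w - us)"
    by auto
  note exact = square_integrable_exact[OF x u]
  note e = noise_second_moment_le(1)[OF exact(1)]
  have "square_integrable M (\<lambda>w. (x_exact t w - xs) - \<gamma> *\<^sub>R adjoint K (noise t w))"
    by (intro square_integrable_diff square_integrable_scaleR
        square_integrable_linear[OF e linear_adjoint_K] exact(2))
  moreover have "square_integrable M (\<lambda>w. (u_exact t w - us) + (1 / (1 + \<omega>)) *\<^sub>R noise t w)"
    by (intro square_integrable_add square_integrable_scaleR e exact(3))
  ultimately show ?case
    unfolding x_Suc_eq u_Suc_eq by (simp add: algebra_simps)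
qed

lemmas square_integrable_x = square_integrable_iterates[THEN conjunct1]
  and square_integrable_u = square_integrable_iterates[THEN conjunct2]

lemma square_integrable_u_plus_r:
  "square_integrable M (\<lambda>w. u t w + r t w - us)"
  using square_integrable_add[OF square_integrable_u
      square_integrable_exact(1)[OF square_integrable_x square_integrable_u]]
  by (simp add: algebra_simps)

lemma sum_expected_progress_le:
  "(\<Sum>i<n. \<integral>w. \<gamma> * (norm (adjoint K (u i w - us)))\<^sup>2 + \<mu> * (norm (u i w + r i w - us))\<^sup>2 \<partial>M)
    \<le> (\<integral>w. lyapunov (x 0 w) (u 0 w) \<partial>M)"
proof (rule sum_le_of_telescoping[where a = "\<lambda>n. \<integral>w. lyapunov (x n w) (u n w) \<partial>M"])
  show "0 \<le> (\<integral>w. lyapunov (x n w) (u n w) \<partial>M)" for n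
    using gamma tau om_nonneg by (intro integral_nonneg_AE) (auto simp: lyapunov_def)
  show "(\<integral>w. lyapunov (x (Suc n) w) (u (Suc n) w) \<partial>M)
      + (\<integral>w. \<gamma> * (norm (adjoint K (u n w - us)))\<^sup>2 + \<mu> * (norm (u n w + r n w - us))\<^sup>2 \<partial>M)
    \<le> (\<integral>w. lyapunov (x n w) (u n w) \<partial>M)" for n
    using square_integrable_x square_integrable_u by (rule expected_lyapunov_decrease)
qed

lemma integrable_expected_progress:
  "integrable M (\<lambda>w. \<gamma> * (norm (adjoint K (u t w - us)))\<^sup>2 + \<mu> * (norm (u t w + r t w - us))\<^sup>2)"
  using square_integrable_linear[OF square_integrable_u linear_adjoint_K]
    square_integrable_u_plus_r
  by (simp add: square_integrable_integrable)

lemma summable_expected_dual_error_if_lambda_min_pos: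
  assumes "lambda_min (K \<circ> adjoint K) > 0"
  shows "summable (\<lambda>t. \<integral>w. (norm (u t w - us))\<^sup>2 \<partial>M)"
proof -
  obtain c where c: "0 < c" "\<And>v. c * norm v \<le> norm (adjoint K v)"
    using linear_inj_bounded_below_pos[OF linear_adjoint_K inj_adjoint_if_lambda_min_pos[OF K_lin assms]]
    by blast
  have "\<gamma> * c\<^sup>2 * (\<integral>w. (norm (u t w - us))\<^sup>2 \<partial>M)
      \<le> (\<integral>w. \<gamma> * (norm (adjoint K (u t w - us)))\<^sup>2 + \<mu> * (norm (u t w + r t w - us))\<^sup>2 \<partial>M)" for t
  proof -
    have "\<gamma> * c\<^sup>2 * (norm v)\<^sup>2 \<le> \<gamma> * (norm (adjoint K v))\<^sup>2" for v
      using c(2)[of v] c(1) gamma by (simp add: power_mono power_mult_distrib [symmetric] mult.assoc)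
    then have "(\<integral>w. \<gamma> * c\<^sup>2 * (norm (u t w - us))\<^sup>2 \<partial>M)
        \<le> (\<integral>w. \<gamma> * (norm (adjoint K (u t w - us)))\<^sup>2 + \<mu> * (norm (u t w + r t w - us))\<^sup>2 \<partial>M)"
      using square_integrable_integrable[OF square_integrable_u]
        integrable_expected_progress mu_nonneg
      by (intro integral_mono) (auto intro: add_increasing2)
    then show ?thesis
      by simp
  qed
  then have "\<gamma> * c\<^sup>2 * (\<Sum>i<n. \<integral>w. (norm (u i w - us))\<^sup>2 \<partial>M)
      \<le> (\<Sum>i<n. \<integral>w. \<gamma> * (norm (adjoint K (u i w - us)))\<^sup>2 + \<mu> * (norm (u i w + r i w - us))\<^sup>2 \<partial>M)"
    for n
    unfolding sum_distrib_left by (rule sum_mono)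
  then have "\<gamma> * c\<^sup>2 * (\<Sum>i<n. \<integral>w. (norm (u i w - us))\<^sup>2 \<partial>M) \<le> (\<integral>w. lyapunov (x 0 w) (u 0 w) \<partial>M)"
    for n
    using sum_expected_progress_le[of n] by (rule order_trans)
  then have "(\<Sum>i<n. \<integral>w. (norm (u i w - us))\<^sup>2 \<partial>M) \<le> (\<integral>w. lyapunov (x 0 w) (u 0 w) \<partial>M) / (\<gamma> * c\<^sup>2)"
    for n
    using gamma c by (simp add: field_simps)
  then show ?thesis
    by (intro summableI_nonneg_bounded) auto
qed

text \<open>Without a lower bound on \<open>K\<^sup>*\<close>, strong convexity only controls \<open>u\<^sup>t + r\<^sup>t\<close>; the relaxed
  dual update transfers the bound to \<open>u\<^sup>t\<close>.\<close>

lemma summable_expected_dual_error_if_mu_pos: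
  assumes \<mu>: "\<mu> > 0"
  shows "summable (\<lambda>t. \<integral>w. (norm (u t w - us))\<^sup>2 \<partial>M)"
proof (rule summable_of_relaxed_recursion[OF _ om_nonneg])
  show "0 \<le> (\<integral>w. (norm (u n w - us))\<^sup>2 \<partial>M)" for n
    by simp
  show "(1 + \<omega>) * (\<integral>w. (norm (u (Suc n) w - us))\<^sup>2 \<partial>M)
      \<le> \<omega> * (\<integral>w. (norm (u n w - us))\<^sup>2 \<partial>M) + (\<integral>w. (norm (u n w + r n w - us))\<^sup>2 \<partial>M)" for n
    using expected_dual_error_recursion[OF square_integrable_x square_integrable_u]
      square_integrable_integrable[OF square_integrable_u]
      square_integrable_integrable[OF square_integrable_u_plus_r]
    by simp
  have "\<mu> * (\<integral>w. (norm (u t w + r t w - us))\<^sup>2 \<partial>M)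
      \<le> (\<integral>w. \<gamma> * (norm (adjoint K (u t w - us)))\<^sup>2 + \<mu> * (norm (u t w + r t w - us))\<^sup>2 \<partial>M)" for t
    using square_integrable_integrable[OF square_integrable_u_plus_r] integrable_expected_progress gamma
    by (subst integral_mult_right_zero [symmetric]) (intro integral_mono, auto)
  then have "\<mu> * (\<Sum>i<n. \<integral>w. (norm (u i w + r i w - us))\<^sup>2 \<partial>M)
      \<le> (\<Sum>i<n. \<integral>w. \<gamma> * (norm (adjoint K (u i w - us)))\<^sup>2 + \<mu> * (norm (u i w + r i w - us))\<^sup>2 \<partial>M)"
    for n
    unfolding sum_distrib_left by (rule sum_mono)
  then have "\<mu> * (\<Sum>i<n. \<integral>w. (norm (u i w + r i w - us))\<^sup>2 \<partial>M) \<le> (\<integral>w. lyapunov (x 0 w) (u 0 w) \<partial>M)"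
    for n
    using sum_expected_progress_le[of n] by (rule order_trans)
  then show "(\<Sum>i<n. \<integral>w. (norm (u i w + r i w - us))\<^sup>2 \<partial>M) \<le> (\<integral>w. lyapunov (x 0 w) (u 0 w) \<partial>M) / \<mu>"
    for n
    using \<mu> by (simp add: field_simps)
qed

lemma expected_dual_error_tendsto_0:
  assumes "lambda_min (K \<circ> adjoint K) > 0 \<or> \<mu> > 0"
  shows "(\<lambda>t. \<integral>\<^sup>+ w. ennreal ((norm (u t w - us))\<^sup>2) \<partial>M) \<longlonglongrightarrow> 0"
proof -
  have "summable (\<lambda>t. \<integral>w. (norm (u t w - us))\<^sup>2 \<partial>M)"
    using assms summable_expected_dual_error_if_lambda_min_pos summable_expected_dual_error_if_mu_pos
    by blast
  then have "(\<lambda>t. ennreal (\<integral>w. (norm (u t w - us))\<^sup>2 \<partial>M)) \<longlonglongrightarrow> ennreal 0"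
    by (intro tendsto_ennrealI summable_LIMSEQ_zero)
  moreover have "(\<integral>\<^sup>+ w. ennreal ((norm (u t w - us))\<^sup>2) \<partial>M) = ennreal (\<integral>w. (norm (u t w - us))\<^sup>2 \<partial>M)"
    for t
    using square_integrable_integrable[OF square_integrable_u]
    by (intro nn_integral_eq_integral) auto
  ultimately show ?thesis
    by simp
qed

end

theorem theorem12:
  fixes M :: "'w measure"
    and f :: "'x::euclidean_space \<Rightarrow> real" and gradf :: "'x \<Rightarrow> 'x" and Lf :: real
    and h :: "'u::euclidean_space \<Rightarrow> ereal" and K :: "'x \<Rightarrow> 'u" and \<mu> :: real
    and \<gamma> \<tau> \<omega> \<omega>ran \<zeta> :: real
    and x0 :: 'x and u0 :: 'u
    and x xhat :: "nat \<Rightarrow> 'w \<Rightarrow> 'x" and u r Rr :: "nat \<Rightarrow> 'w \<Rightarrow> 'u"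
    and F :: "nat \<Rightarrow> 'w measure"
  assumes prob: "prob_space M"
    and K_lin: "linear K" and K_nz: "K \<noteq> (\<lambda>_. 0)"
    and f_conv: "convex_on UNIV f"
    and f_grad: "\<And>z. (f has_derivative (\<lambda>d. gradf z \<bullet> d)) (at z)"
    and f_smooth: "Lf-lipschitz_on UNIV gradf"
    and h_proper: "proper_fun h" and h_closed: "closed_fun h" and h_conv: "convex_fun h"
    and mu_nonneg: "\<mu> \<ge> 0" and h_strong: "strongly_convex_fun \<mu> (fenchel_conj h)"
    and saddle: "\<exists>xs us. 0 = gradf xs + adjoint K us
                        \<and> K xs \<in> subdiff (fenchel_conj h) us"
    and om_nonneg: "\<omega> \<ge> 0" and omran_nonneg: "\<omega>ran \<ge> 0" and zeta: "0 \<le> \<zeta>" "\<zeta> \<le> 1"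
    and x_0: "\<And>w. x 0 w = x0" and u_0: "\<And>w. u 0 w = u0"
    and xhat_def: "\<And>t w. xhat t w = x t w - \<gamma> *\<^sub>R gradf (x t w) - \<gamma> *\<^sub>R adjoint K (u t w)"
    and r_def: "\<And>t w. r t w = prox (\<lambda>v. ereal \<tau> * fenchel_conj h v) (u t w + \<tau> *\<^sub>R K (xhat t w)) - u t w"
    and u_step: "\<And>t w. u (Suc t) w = u t w + (1 / (1 + \<omega>)) *\<^sub>R Rr t w"
    and x_step: "\<And>t w. x (Suc t) w = xhat t w - (\<gamma> * (1 + \<omega>)) *\<^sub>R
                                       (adjoint K (u (Suc t) w) - adjoint K (u t w))"
    and F_def: "\<And>t. F t = sigma (space M)
                  (\<Union>s\<in>{..t}. {(\<lambda>w. (x s w, u s w)) -` A \<inter> space M | A. A \<in> sets borel})"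
    and Rr_meas: "\<And>t. Rr t \<in> borel_measurable M"
    and unbiased: "\<And>t b. b \<in> Basis \<Longrightarrow>
        AE w in M. real_cond_exp M (F t) (\<lambda>w. Rr t w \<bullet> b) w = r t w \<bullet> b"
    and var1: "\<And>t. AE w in M.
        nn_cond_exp M (F t) (\<lambda>w. ennreal ((norm (Rr t w - r t w))\<^sup>2)) w
          \<le> ennreal (\<omega> * (norm (r t w))\<^sup>2)"
    and var2: "\<And>t. AE w in M.
        nn_cond_exp M (F t) (\<lambda>w. ennreal ((norm (adjoint K (Rr t w - r t w)))\<^sup>2)) w
          + ennreal (\<zeta> * (norm (adjoint K (r t w)))\<^sup>2)
          \<le> ennreal (\<omega>ran * (norm (r t w))\<^sup>2)"
    and nondeg: "lambda_min (K \<circ> adjoint K) > 0 \<or> \<mu> > 0"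
    and gamma: "0 < \<gamma>" "\<gamma> * Lf < 2"
    and tau: "0 < \<tau>"
    and step: "\<gamma> * \<tau> * ((1 - \<zeta>) * (onorm K)\<^sup>2 + \<omega>ran) \<le> 1"
  shows "\<exists>us. (\<forall>v. (\<forall>v'. fenchel_conj (\<lambda>z. ereal (f z)) (- adjoint K v) + fenchel_conj h v
                          \<le> fenchel_conj (\<lambda>z. ereal (f z)) (- adjoint K v') + fenchel_conj h v')
                   \<longleftrightarrow> v = us)
            \<and> (\<lambda>t. \<integral>\<^sup>+ w. ennreal ((norm (u t w - us))\<^sup>2) \<partial>M) \<longlonglongrightarrow> 0"
proof -
  obtain xs us where saddle_point: "0 = gradf xs + adjoint K us" "K xs \<in> subdiff (fenchel_conj h) us"
    using saddle by blast
  interpret randprox_iteration f gradf Lf h K \<mu> \<gamma> \<tau> \<omega> \<omega>ran \<zeta> xs us M x0 u0 x xhat u r Rr F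
    unfolding randprox_iteration_def randprox_iteration_axioms_def randprox_setting_def
      randprox_setting_axioms_def smooth_convex_fun_def smooth_convex_fun_axioms_def smooth_fun_def
    by (intro conjI allI impI) (rule assms saddle_point | assumption)+
  show ?thesis
  proof (intro exI conjI allI)
    show "(\<forall>v'. fenchel_conj (\<lambda>z. ereal (f z)) (- adjoint K v) + fenchel_conj h v
        \<le> fenchel_conj (\<lambda>z. ereal (f z)) (- adjoint K v') + fenchel_conj h v') \<longleftrightarrow> v = us" for v
      using dual_obj_argmin_iff[OF nondeg, of v] unfolding dual_obj_def .
    show "(\<lambda>t. \<integral>\<^sup>+ w. ennreal ((norm (u t w - us))\<^sup>2) \<partial>M) \<longlonglongrightarrow> 0"
      by (rule expected_dual_error_tendsto_0[OF nondeg])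
  qed
qed

end
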